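(* Consider the switching retarded system $\Sigma_r=(\mathcal{C},\mathrm{PC},\phi)$ described in the context, and suppose there exists $L>0$ such that $|f_q(\psi_1)-f_q(\psi_2)|\le L\|\psi_1-\psi_2\|$ for all $\psi_1,\psi_2\in\mathcal{C}$ and $q\in\mathcal{Q}$. Then the following are equivalent: (i) $\Sigma_r$ is UGES; (ii) there exist a continuous functional $V:\mathcal{C}\to\mathbb{R}_+$ and positive reals $p,\underline{c},\overline{c}$ such that $\underline{c}\|\psi\|^p\le V(\psi)\le\overline{c}\|\psi\|^p$ for all $\psi\in\mathcal{C}$ and $\overline{D}_qV(\psi)\le-\|\psi\|^p$ for all $\psi\in\mathcal{C}$, $q\in\mathcal{Q}$; (iii) there exist a functional $V:\mathcal{C}\to\mathbb{R}_+$ and positive reals $p,c$ such that for every $\psi\in\mathcal{C}$ and $q\in\mathcal{Q}$ the map $t\mapsto V(T_q(t)\psi)$ is continuous from the left, $\overline{D}_qV(\psi)\le-\|\psi\|^p$ for all $\psi\in\mathcal{C}$, $q\in\mathcal{Q}$, and $V(\psi)\le c\|\psi\|^p$ for all $\psi\in\mathcal{C}$.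
   Context: Let $r\ge0$, $n\ge1$, and $\mathcal{C}=\mathcal{C}([-r,0],\mathbb{R}^n)$ with the sup norm $\|\cdot\|$. Let $\mathcal{Q}$ be a nonempty set and for each $q\in\mathcal{Q}$ let $f_q:\mathcal{C}\to\mathbb{R}^n$ be continuous with $f_q(0)=0$. Consider $\dot x(t)=f_{\sigma(t)}(x_t)$, $t\ge0$, $x(\theta)=\varphi(\theta)$ for $\theta\in[-r,0]$, with $\varphi\in\mathcal{C}$, where $x_t(\theta)=x(t+\theta)$, $\theta\in[-r,0]$, and $\sigma$ belongs to the set $\mathrm{PC}$ of piecewise constant functions $\mathbb{R}_+\to\mathcal{Q}$. Assume that for every $q\in\mathcal{Q}$ and $\varphi\in\mathcal{C}$ the system with $\sigma\equiv q$ has a unique solution on $[-r,+\infty)$, and set $T_q(t)\varphi=x_t$ (a strongly continuous nonlinear semigroup on $\mathcal{C}$). For $\sigma\in\mathrm{PC}$ equal to $\sigma_k$ on $[t_k,t_{k+1})$ with $0=t_0<t_1<\cdots$, define $\phi(t,\varphi,\sigma)=T_{\sigma_k}(t-t_k)T_{\sigma_{k-1}}(t_k-t_{k-1})\cdots T_{\sigma_0}(t_1)\varphi$ for $t\in[t_k,t_{k+1})$; this gives $\Sigma_r=(\mathcal{C},\mathrm{PC},\phi)$. $\Sigma_r$ is UGES if there exist $M,\lambda>0$ with $\|\phi(t,\varphi,\sigma)\|\le Me^{-\lambda t}\|\varphi\|$ for all $t\ge0$, $\varphi\in\mathcal{C}$, $\sigma\in\mathrm{PC}$. For $q\in\mathcal{Q}$,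 $\overline{D}_qV(\psi)=\limsup_{h\downarrow0}\frac1h\big(V(T_q(h)\psi)-V(\psi)\big)$. *)

theory Defs
  imports "HOL-Analysis.Analysis"
begin

text \<open>The phase space C([-r,0],R^n). Elements are represented as functions
  real => real^'n that are continuous on [-r,0] and normalised to 0 outside [-r,0].\<close>
definition CC :: "real \<Rightarrow> (real \<Rightarrow> real^'n) set" where
  "CC r = {\<phi>. continuous_on {-r..0} \<phi> \<and> (\<forall>\<theta>. \<theta> \<notin> {-r..0} \<longrightarrow> \<phi> \<theta> = 0)}"

definition cnorm :: "real \<Rightarrow> (real \<Rightarrow> real^'n) \<Rightarrow> real" where
  "cnorm r \<phi> = (SUP \<theta>\<in>{-r..0}. norm (\<phi> \<theta>))"

definition ccont :: "real \<Rightarrow> ((real \<Rightarrow> real^'n) \<Rightarrow> 'b::metric_space) \<Rightarrow> bool" where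
  "ccont r F \<longleftrightarrow> (\<forall>\<phi>\<in>CC r. \<forall>\<epsilon>>0. \<exists>\<delta>>0. \<forall>\<psi>\<in>CC r.
      cnorm r (\<psi> - \<phi>) < \<delta> \<longrightarrow> dist (F \<psi>) (F \<phi>) < \<epsilon>)"

definition seg :: "real \<Rightarrow> (real \<Rightarrow> real^'n) \<Rightarrow> real \<Rightarrow> (real \<Rightarrow> real^'n)" where
  "seg r x t = (\<lambda>\<theta>. if \<theta> \<in> {-r..0} then x (t + \<theta>) else 0)"

definition is_sol :: "real \<Rightarrow> ('q \<Rightarrow> (real \<Rightarrow> real^'n) \<Rightarrow> real^'n) \<Rightarrow> 'q
    \<Rightarrow> (real \<Rightarrow> real^'n) \<Rightarrow> (real \<Rightarrow> real^'n) \<Rightarrow> bool" where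
  "is_sol r f q \<phi> x \<longleftrightarrow>
     (\<forall>\<theta>\<in>{-r..0}. x \<theta> = \<phi> \<theta>) \<and> continuous_on {-r..} x \<and>
     (\<forall>t\<ge>0. (x has_vector_derivative f q (seg r x t)) (at t within {0..}))"

definition Tsg :: "real \<Rightarrow> ('q \<Rightarrow> (real \<Rightarrow> real^'n) \<Rightarrow> real^'n) \<Rightarrow> 'q
    \<Rightarrow> real \<Rightarrow> (real \<Rightarrow> real^'n) \<Rightarrow> (real \<Rightarrow> real^'n)" where
  "Tsg r f q t \<phi> = seg r (SOME x. is_sol r f q \<phi> x) t"

definition PC_part :: "(real \<Rightarrow> 'q) \<Rightarrow> (nat \<Rightarrow> real) \<Rightarrow> bool" where
  "PC_part \<sigma> ts \<longleftrightarrow> ts 0 = 0 \<and> strict_mono ts \<and> filterlim ts at_top sequentially \<and>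
     (\<forall>k. \<forall>t\<in>{ts k..<ts (Suc k)}. \<sigma> t = \<sigma> (ts k))"

definition PC :: "(real \<Rightarrow> 'q) set" where
  "PC = {\<sigma>. \<exists>ts. PC_part \<sigma> ts}"

fun flow_at :: "real \<Rightarrow> ('q \<Rightarrow> (real \<Rightarrow> real^'n) \<Rightarrow> real^'n) \<Rightarrow> (real \<Rightarrow> 'q)
    \<Rightarrow> (nat \<Rightarrow> real) \<Rightarrow> nat \<Rightarrow> (real \<Rightarrow> real^'n) \<Rightarrow> (real \<Rightarrow> real^'n)" where
  "flow_at r f \<sigma> ts 0 \<phi> = \<phi>"
| "flow_at r f \<sigma> ts (Suc k) \<phi> =
     Tsg r f (\<sigma> (ts k)) (ts (Suc k) - ts k) (flow_at r f \<sigma> ts k \<phi>)"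

definition flow :: "real \<Rightarrow> ('q \<Rightarrow> (real \<Rightarrow> real^'n) \<Rightarrow> real^'n)
    \<Rightarrow> real \<Rightarrow> (real \<Rightarrow> real^'n) \<Rightarrow> (real \<Rightarrow> 'q) \<Rightarrow> (real \<Rightarrow> real^'n)" where
  "flow r f t \<phi> \<sigma> =
     (let ts = (SOME ts. PC_part \<sigma> ts);
          k = (SOME k. t \<in> {ts k..<ts (Suc k)})
      in Tsg r f (\<sigma> (ts k)) (t - ts k) (flow_at r f \<sigma> ts k \<phi>))"

definition UGES :: "real \<Rightarrow> ('q \<Rightarrow> (real \<Rightarrow> real^'n) \<Rightarrow> real^'n) \<Rightarrow> bool" where
  "UGES r f \<longleftrightarrow> (\<exists>M>0. \<exists>lam>0. \<forall>t\<ge>0. \<forall>\<phi>\<in>CC r. \<forall>\<sigma>\<in>PC.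
      cnorm r (flow r f t \<phi> \<sigma>) \<le> M * exp (- lam * t) * cnorm r \<phi>)"

definition Dini_up :: "real \<Rightarrow> ('q \<Rightarrow> (real \<Rightarrow> real^'n) \<Rightarrow> real^'n) \<Rightarrow> 'q
    \<Rightarrow> ((real \<Rightarrow> real^'n) \<Rightarrow> real) \<Rightarrow> (real \<Rightarrow> real^'n) \<Rightarrow> ereal" where
  "Dini_up r f q V \<psi> =
     Limsup (at_right 0) (\<lambda>h. ereal ((V (Tsg r f q h \<psi>) - V \<psi>) / h))"

end

theory Submission
  imports Defs
begin

text \<open>
  Switching signals are replaced by finite words of (mode, duration) pairs: every value of the
  switched flow is the run of such a word and conversely, so UGES is a uniform exponential
  estimate for runs of words.

  Given that estimate with rate \<open>2 \<lambda>\<close>, the functional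
  \<open>V \<psi> = (SUP w. exp (\<lambda> * dur w) * \<parallel>run w \<psi>\<parallel>) / \<lambda>\<close> lies between \<open>\<parallel>\<psi>\<parallel> / \<lambda>\<close> and
  \<open>M \<parallel>\<psi>\<parallel> / \<lambda>\<close>, is continuous, and decays at rate \<open>\<lambda>\<close> along every mode; this is (ii) with
  \<open>p = 1\<close>, and (ii) gives (iii) because trajectories are continuous.

  Conversely, under (iii) \<open>V\<close> drops by at least \<open>m powr p\<close> per unit of time while the norm stays
  above \<open>m\<close>. Against \<open>V \<psi> \<le> c \<parallel>\<psi>\<parallel> powr p\<close> this bounds the overshoot of every run by a constant
  \<open>K\<close> and halves the norm after the fixed time \<open>c (2 K) powr p + 1\<close>, which yields exponential
  decay. The Lipschitz constant enters only through a Gronwall estimate for the retarded equation,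
  \<open>\<parallel>T\<^sub>q t \<phi> - T\<^sub>q t \<psi>\<parallel> \<le> exp (L t) \<parallel>\<phi> - \<psi>\<parallel>\<close>.
\<close>

lemma CC_zero [simp]: "(\<lambda>_. 0) \<in> CC r"
  by (simp add: CC_def)

lemma CC_diff [intro]: "\<phi> \<in> CC r \<Longrightarrow> \<psi> \<in> CC r \<Longrightarrow> \<phi> - \<psi> \<in> CC r"
  unfolding CC_def by (auto intro!: continuous_on_diff)

lemma bdd_above_norm_CC:
  assumes "\<phi> \<in> CC r"
  shows "bdd_above ((\<lambda>\<theta>. norm (\<phi> \<theta>)) ` {-r..0})"
proof -
  have "compact (\<phi> ` {-r..0})"
    using assms by (intro compact_continuous_image) (auto simp: CC_def)
  then show ?thesis
    by (auto dest!: compact_imp_bounded simp: bounded_iff bdd_above_def)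
qed

lemma norm_le_cnorm: "\<phi> \<in> CC r \<Longrightarrow> \<theta> \<in> {-r..0} \<Longrightarrow> norm (\<phi> \<theta>) \<le> cnorm r \<phi>"
  unfolding cnorm_def by (rule cSUP_upper[OF _ bdd_above_norm_CC])

lemma cnorm_leI: "r \<ge> 0 \<Longrightarrow> (\<And>\<theta>. \<theta> \<in> {-r..0} \<Longrightarrow> norm (\<phi> \<theta>) \<le> B) \<Longrightarrow> cnorm r \<phi> \<le> B"
  unfolding cnorm_def by (rule cSUP_least) auto

lemma cnorm_nonneg: "r \<ge> 0 \<Longrightarrow> \<phi> \<in> CC r \<Longrightarrow> 0 \<le> cnorm r \<phi>"
  using order_trans[OF norm_ge_zero norm_le_cnorm[of \<phi> r 0]] by simp

lemma cnorm_diff_zero [simp]: "cnorm r (\<phi> - (\<lambda>_. 0)) = cnorm r \<phi>"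
  by (simp add: fun_diff_def)

lemma cnorm_commute: "cnorm r (\<phi> - \<psi>) = cnorm r (\<psi> - \<phi>)"
  by (simp add: cnorm_def norm_minus_commute)

lemma cnorm_triangle:
  assumes "r \<ge> 0" "\<phi> \<in> CC r" "\<psi> \<in> CC r" "\<eta> \<in> CC r"
  shows "cnorm r (\<phi> - \<eta>) \<le> cnorm r (\<phi> - \<psi>) + cnorm r (\<psi> - \<eta>)"
proof (rule cnorm_leI[OF assms(1)])
  fix \<theta> assume "\<theta> \<in> {-r..0}"
  then show "norm ((\<phi> - \<eta>) \<theta>) \<le> cnorm r (\<phi> - \<psi>) + cnorm r (\<psi> - \<eta>)"
    using norm_triangle_ineq[of "\<phi> \<theta> - \<psi> \<theta>" "\<psi> \<theta> - \<eta> \<theta>"] assms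
      norm_le_cnorm[of "\<phi> - \<psi>" r \<theta>] norm_le_cnorm[of "\<psi> - \<eta>" r \<theta>]
    by fastforce
qed

lemma cnorm_diff_le:
  assumes "r \<ge> 0" "\<phi> \<in> CC r" "\<psi> \<in> CC r"
  shows "cnorm r (\<phi> - \<psi>) \<le> cnorm r \<phi> + cnorm r \<psi>"
  using cnorm_triangle[OF assms(1,2) CC_zero assms(3)] by (simp add: cnorm_commute[of r "\<lambda>_. 0"])

lemma cnorm_le_add_diff:
  assumes "r \<ge> 0" "\<phi> \<in> CC r" "\<psi> \<in> CC r"
  shows "cnorm r \<phi> \<le> cnorm r \<psi> + cnorm r (\<phi> - \<psi>)"
  using cnorm_triangle[OF assms(1,2,3) CC_zero] by (simp add: cnorm_commute[of r \<phi>])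

lemma seg_CC:
  assumes "continuous_on {-r..} x" "t \<ge> 0"
  shows "seg r x t \<in> CC r"
proof -
  have "continuous_on {-r..0} (\<lambda>\<theta>. x (t + \<theta>))"
    by (rule continuous_on_compose2[OF assms(1)])
      (use assms in \<open>auto intro: continuous_on_add continuous_on_const continuous_on_id\<close>)
  then have "continuous_on {-r..0} (seg r x t)"
    by (rule continuous_on_eq) (simp add: seg_def)
  then show ?thesis
    by (simp add: CC_def seg_def)
qed

section \<open>Real-variable comparison lemmas\<close>

lemma Sup_nonincreasing_segment_mem:
  fixes h :: "real \<Rightarrow> real"
  assumes "a \<le> b" and left: "\<And>t. t \<in> {a<..b} \<Longrightarrow> (h \<longlongrightarrow> h t) (at_left t)"
  defines "S \<equiv> {s \<in> {a..b}. \<forall>u\<in>{a..s}. h u \<le> h a}"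
  shows "Sup S \<in> S"
proof -
  define c where "c = Sup S"
  have "a \<in> S" and bdd: "bdd_above S"
    using \<open>a \<le> b\<close> by (auto simp: S_def bdd_above_def)
  then have ac: "a \<le> c"
    unfolding c_def by (rule cSup_upper)
  have cb: "c \<le> b"
    unfolding c_def using \<open>a \<in> S\<close> by (intro cSup_least) (auto simp: S_def)
  have below: "h u \<le> h a" if "a \<le> u" "u < c" for u
  proof -
    obtain s where "s \<in> S" "u < s"
      using less_cSupD[of S u] \<open>a \<in> S\<close> \<open>u < c\<close> unfolding c_def by blast
    then show ?thesis using that by (auto simp: S_def)
  qed
  have "h c \<le> h a"
  proof (cases "a < c")
    case True
    have "eventually (\<lambda>u. h u \<le> h a) (at_left c)"
      using eventually_at_left_real[OF True] by eventually_elim (auto intro: below)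
    then show ?thesis
      using tendsto_upperbound[OF left] True cb by auto
  qed (use ac in auto)
  then have "c \<in> S"
    using ac cb below by (force simp: S_def)
  then show ?thesis
    by (simp only: c_def)
qed

lemma right_locally_nonincreasing_imp_nonincreasing:
  fixes h :: "real \<Rightarrow> real"
  assumes "a \<le> b"
    and left: "\<And>t. t \<in> {a<..b} \<Longrightarrow> (h \<longlongrightarrow> h t) (at_left t)"
    and right: "\<And>t. t \<in> {a..<b} \<Longrightarrow> \<exists>\<delta>>0. \<forall>s. t < s \<and> s < t + \<delta> \<longrightarrow> h s \<le> h t"
  shows "h b \<le> h a"
proof -
  define S where "S = {s \<in> {a..b}. \<forall>u\<in>{a..s}. h u \<le> h a}"
  define c where "c = Sup S"
  have cS: "c \<in> S"
    unfolding c_def S_def using Sup_nonincreasing_segment_mem[OF assms(1,2)] .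
  then have c: "a \<le> c" "c \<le> b" "\<And>u. u \<in> {a..c} \<Longrightarrow> h u \<le> h a"
    by (auto simp: S_def)
  have "c = b"
  proof (rule ccontr)
    assume "c \<noteq> b"
    then obtain \<delta> where "\<delta> > 0" and \<delta>: "\<And>s. c < s \<Longrightarrow> s < c + \<delta> \<Longrightarrow> h s \<le> h c"
      using right[of c] c by force
    define s where "s = min (c + \<delta> / 2) b"
    have "h u \<le> h a" if "a \<le> u" "u \<le> s" for u
    proof (cases "u \<le> c")
      case False
      then show ?thesis
        using \<delta>[of u] c(3)[of c] c(1) \<open>\<delta> > 0\<close> that by (simp add: s_def)
    qed (use c(3) that in simp)
    then have "s \<in> S"
      using c \<open>\<delta> > 0\<close> by (simp add: S_def s_def)
    moreover have "bdd_above S"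
      by (auto simp: S_def bdd_above_def)
    ultimately have "s \<le> c"
      unfolding c_def by (rule cSup_upper)
    then show False
      using \<open>\<delta> > 0\<close> \<open>c \<noteq> b\<close> c(2) by (simp add: s_def)
  qed
  then show ?thesis
    using cS by (simp add: S_def)
qed

lemma right_Dini_nonpos_imp_nonincreasing:
  fixes h :: "real \<Rightarrow> real"
  assumes "a \<le> b"
    and left: "\<And>t. t \<in> {a<..b} \<Longrightarrow> (h \<longlongrightarrow> h t) (at_left t)"
    and right: "\<And>t \<epsilon>. t \<in> {a..<b} \<Longrightarrow> \<epsilon> > 0 \<Longrightarrow>
                  \<exists>\<delta>>0. \<forall>s. t < s \<and> s < t + \<delta> \<longrightarrow> h s \<le> h t + \<epsilon> * (s - t)"
  shows "h b \<le> h a"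
proof (rule field_le_epsilon)
  fix e :: real assume "e > 0"
  define \<epsilon> where "\<epsilon> = e / (b - a + 1)"
  have "\<epsilon> > 0" using \<open>e > 0\<close> \<open>a \<le> b\<close> by (simp add: \<epsilon>_def)
  have "h b - \<epsilon> * (b - a) \<le> h a - \<epsilon> * (a - a)"
  proof (rule right_locally_nonincreasing_imp_nonincreasing[OF \<open>a \<le> b\<close>])
    fix t assume "t \<in> {a<..b}"
    then show "((\<lambda>u. h u - \<epsilon> * (u - a)) \<longlongrightarrow> h t - \<epsilon> * (t - a)) (at_left t)"
      by (intro tendsto_intros left tendsto_ident_at)
  next
    fix t assume "t \<in> {a..<b}"
    then obtain \<delta> where "\<delta> > 0" "\<forall>s. t < s \<and> s < t + \<delta> \<longrightarrow> h s \<le> h t + \<epsilon> * (s - t)"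
      using right[OF _ \<open>\<epsilon> > 0\<close>] by blast
    then show "\<exists>\<delta>>0. \<forall>s. t < s \<and> s < t + \<delta> \<longrightarrow> h s - \<epsilon> * (s - a) \<le> h t - \<epsilon> * (t - a)"
      by (auto simp: algebra_simps)
  qed
  moreover have "\<epsilon> * (b - a) \<le> e"
    using \<open>e > 0\<close> \<open>a \<le> b\<close> by (simp add: \<epsilon>_def field_simps)
  ultimately show "h b \<le> h a + e" by simp
qed

lemma has_vector_derivative_right_norm_bound:
  fixes z :: "real \<Rightarrow> 'a::real_normed_vector"
  assumes "(z has_vector_derivative d) (at t within {t..})" "\<epsilon> > 0"
  shows "\<exists>\<delta>>0. \<forall>s. t < s \<and> s < t + \<delta> \<longrightarrow> norm (z s) \<le> norm (z t) + (norm d + \<epsilon>) * (s - t)"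
proof -
  obtain \<delta> where "\<delta> > 0" and
    \<delta>: "\<And>s. s \<in> {t..} \<Longrightarrow> norm (s - t) < \<delta> \<Longrightarrow> norm (z s - z t - (s - t) *\<^sub>R d) \<le> \<epsilon> * norm (s - t)"
    using assms unfolding has_vector_derivative_def has_derivative_within_alt by blast
  have "norm (z s) \<le> norm (z t) + (norm d + \<epsilon>) * (s - t)" if "t < s" "s < t + \<delta>" for s
  proof -
    have "norm (z s) \<le> norm (z t) + norm ((s - t) *\<^sub>R d) + norm (z s - z t - (s - t) *\<^sub>R d)"
      using norm_triangle_sub[of "z s" "z t"] norm_triangle_sub[of "z s - z t" "(s - t) *\<^sub>R d"]
      by simp
    also have "\<dots> \<le> norm (z t) + norm d * (s - t) + \<epsilon> * (s - t)"
      using \<delta>[of s] that by simp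
    finally show ?thesis by (simp add: algebra_simps)
  qed
  then show ?thesis using \<open>\<delta> > 0\<close> by blast
qed

lemma first_nonneg_point:
  fixes h :: "real \<Rightarrow> real"
  assumes "a \<le> b" "continuous_on {a..b} h" "0 \<le> h b"
  obtains c where "c \<in> {a..b}" "0 \<le> h c" "\<And>u. u \<in> {a..<c} \<Longrightarrow> h u < 0"
proof -
  define S where "S = {a..b} \<inter> h -` {0..}"
  have "closed S"
    unfolding S_def using assms(2) by (rule continuous_closed_preimage) auto
  moreover have "b \<in> S" "bdd_below S"
    using assms by (auto simp: S_def)
  ultimately have "Inf S \<in> S"
    using closed_contains_Inf by blast
  moreover have "h u < 0" if "u \<in> {a..<Inf S}" for u
    using cInf_lower[OF _ \<open>bdd_below S\<close>, of u] that \<open>Inf S \<in> S\<close> by (force simp: S_def)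
  ultimately show ?thesis
    using that by (auto simp: S_def)
qed

lemma exp_bound_right_Dini:
  fixes z :: "real \<Rightarrow> 'a::real_normed_vector"
  assumes "(z has_vector_derivative d) (at u within {u..})" "norm d \<le> L * (C * exp (L * u))"
    and "L \<ge> 0" "C \<ge> 0" "\<epsilon> > 0"
  shows "\<exists>\<delta>>0. \<forall>s. u < s \<and> s < u + \<delta> \<longrightarrow>
           norm (z s) - C * exp (L * s) \<le> norm (z u) - C * exp (L * u) + \<epsilon> * (s - u)"
proof -
  obtain \<delta> where "\<delta> > 0" and
    \<delta>: "\<And>s. u < s \<Longrightarrow> s < u + \<delta> \<Longrightarrow> norm (z s) \<le> norm (z u) + (norm d + \<epsilon>) * (s - u)"
    using has_vector_derivative_right_norm_bound[OF assms(1,5)] by blast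
  have "norm (z s) - C * exp (L * s) \<le> norm (z u) - C * exp (L * u) + \<epsilon> * (s - u)"
    if "u < s" "s < u + \<delta>" for s
  proof -
    have "C * exp (L * u) * (1 + L * (s - u)) \<le> C * exp (L * u) * exp (L * (s - u))"
      using assms(4) by (intro mult_left_mono exp_ge_add_one_self) auto
    also have "\<dots> = C * exp (L * s)"
      by (simp add: algebra_simps flip: exp_add)
    finally have "C * exp (L * u) + L * (C * exp (L * u)) * (s - u) \<le> C * exp (L * s)"
      by (simp add: algebra_simps)
    moreover have "norm d * (s - u) \<le> L * (C * exp (L * u)) * (s - u)"
      using assms(2) that by (simp add: mult_right_mono)
    ultimately show ?thesis
      using \<delta>[OF that] by (simp add: algebra_simps)
  qed
  then show ?thesis
    using \<open>\<delta> > 0\<close> by blast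
qed

lemma SUP_delay_window_le:
  fixes z :: "real \<Rightarrow> 'a::real_normed_vector"
  assumes "r \<ge> 0" "L \<ge> 0" "\<delta> \<le> C" "u \<ge> 0"
    and init: "\<And>\<theta>. \<theta> \<in> {-r..0} \<Longrightarrow> norm (z \<theta>) \<le> \<delta>"
    and later: "\<And>v. v \<in> {0..u} \<Longrightarrow> norm (z v) \<le> C * exp (L * v)"
  shows "(SUP \<theta>\<in>{-r..0}. norm (z (u + \<theta>))) \<le> C * exp (L * u)"
proof (rule cSUP_least)
  fix \<theta> assume \<theta>: "\<theta> \<in> {-r..0}"
  have "norm (z 0) \<le> \<delta>"
    using init assms(1) by simp
  then have "C \<ge> 0"
    using assms(3) norm_ge_zero[of "z 0"] by linarith
  show "norm (z (u + \<theta>)) \<le> C * exp (L * u)"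
  proof (cases "u + \<theta> < 0")
    case True
    have "C * 1 \<le> C * exp (L * u)"
      using assms(2,4) \<open>C \<ge> 0\<close> by (intro mult_left_mono) auto
    then show ?thesis
      using init[of "u + \<theta>"] True \<theta> assms(3,4) by simp
  next
    case False
    have "C * exp (L * (u + \<theta>)) \<le> C * exp (L * u)"
      using \<theta> assms(2) \<open>C \<ge> 0\<close> by (simp add: mult_left_mono)
    then show ?thesis
      using later[of "u + \<theta>"] False \<theta> by simp
  qed
qed (use assms(1) in auto)

text \<open>\<open>h\<close> below is the excess over the comparison function. Up to its first nonnegative point the
  whole delay window stays below the comparison function, so the right Dini derivative of \<open>h\<close> is
  nonpositive there.\<close>

lemma retarded_gronwall_strict:
  fixes z z' :: "real \<Rightarrow> 'a::real_normed_vector"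
  assumes r: "r \<ge> 0" and L: "L \<ge> 0"
    and cont: "continuous_on {-r..} z"
    and init: "\<And>\<theta>. \<theta> \<in> {-r..0} \<Longrightarrow> norm (z \<theta>) \<le> \<delta>"
    and deriv: "\<And>u. u \<ge> 0 \<Longrightarrow> (z has_vector_derivative z' u) (at u within {u..})"
    and growth: "\<And>u. u \<ge> 0 \<Longrightarrow> norm (z' u) \<le> L * (SUP \<theta>\<in>{-r..0}. norm (z (u + \<theta>)))"
    and "\<delta> < \<delta>'" "t \<ge> 0"
  shows "norm (z t) < \<delta>' * exp (L * t)"
proof (rule ccontr)
  define h where "h u = norm (z u) - \<delta>' * exp (L * u)" for u
  have "norm (z 0) \<le> \<delta>"
    using init r by simp
  then have "0 < \<delta>'"
    using \<open>\<delta> < \<delta>'\<close> norm_ge_zero[of "z 0"] by linarith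
  assume "\<not> norm (z t) < \<delta>' * exp (L * t)"
  then have "0 \<le> h t" by (simp add: h_def)
  moreover have "continuous_on {0..t} h"
    unfolding h_def by (intro continuous_intros continuous_on_subset[OF cont]) (use r in auto)
  ultimately obtain c where c: "c \<in> {0..t}" "0 \<le> h c" and neg: "\<And>u. u \<in> {0..<c} \<Longrightarrow> h u < 0"
    using first_nonneg_point \<open>t \<ge> 0\<close> by blast
  have "h c \<le> h 0"
  proof (rule right_Dini_nonpos_imp_nonincreasing[of 0 c h])
    fix u assume "u \<in> {0<..c}"
    then have "isCont z u"
      using cont r by (intro continuous_on_interior[of "{-r..}"]) auto
    then show "(h \<longlongrightarrow> h u) (at_left u)"
      unfolding h_def by (intro tendsto_intros) (simp add: isCont_def filterlim_at_split)
  next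
    fix u \<epsilon> :: real assume u: "u \<in> {0..<c}" and "\<epsilon> > 0"
    have "(SUP \<theta>\<in>{-r..0}. norm (z (u + \<theta>))) \<le> \<delta>' * exp (L * u)"
      using u neg \<open>\<delta> < \<delta>'\<close> by (intro SUP_delay_window_le[OF r L _ _ init]) (auto simp: h_def less_imp_le)
    then have "norm (z' u) \<le> L * (\<delta>' * exp (L * u))"
      using growth[of u] u L by (auto intro: order_trans mult_left_mono)
    then show "\<exists>\<delta>>0. \<forall>s. u < s \<and> s < u + \<delta> \<longrightarrow> h s \<le> h u + \<epsilon> * (s - u)"
      unfolding h_def using exp_bound_right_Dini[OF deriv] u L \<open>0 < \<delta>'\<close> \<open>\<epsilon> > 0\<close> by simp
  qed (use c in auto)
  moreover have "h 0 < 0"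
    using \<open>norm (z 0) \<le> \<delta>\<close> \<open>\<delta> < \<delta>'\<close> by (simp add: h_def)
  ultimately show False
    using c by simp
qed

lemma retarded_gronwall:
  fixes z z' :: "real \<Rightarrow> 'a::real_normed_vector"
  assumes "r \<ge> 0" "L \<ge> 0" "continuous_on {-r..} z"
    and "\<And>\<theta>. \<theta> \<in> {-r..0} \<Longrightarrow> norm (z \<theta>) \<le> \<delta>"
    and "\<And>u. u \<ge> 0 \<Longrightarrow> (z has_vector_derivative z' u) (at u within {u..})"
    and "\<And>u. u \<ge> 0 \<Longrightarrow> norm (z' u) \<le> L * (SUP \<theta>\<in>{-r..0}. norm (z (u + \<theta>)))"
    and "t \<ge> 0"
  shows "norm (z t) \<le> \<delta> * exp (L * t)"
proof -
  have "norm (z t) / exp (L * t) \<le> \<delta>"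
  proof (rule dense_ge)
    fix \<delta>' assume "\<delta> < \<delta>'"
    then show "norm (z t) / exp (L * t) \<le> \<delta>'"
      using retarded_gronwall_strict[OF assms(1-6) \<open>\<delta> < \<delta>'\<close> assms(7)]
      by (simp add: divide_le_eq)
  qed
  then show ?thesis
    by (simp add: divide_le_eq)
qed

lemma le_root_of_powr_le:
  fixes m x c p :: real
  assumes "p > 0" "c > 0" "m \<ge> 0" "x \<ge> 0" "m powr p \<le> c * x powr p"
  shows "m \<le> c powr (1 / p) * x"
proof (rule ccontr)
  assume "\<not> m \<le> c powr (1 / p) * x"
  then have "(c powr (1 / p) * x) powr p < m powr p"
    using assms by (intro powr_less_mono2) auto
  moreover have "(c powr (1 / p) * x) powr p = c * x powr p"
    using assms by (simp add: powr_mult powr_powr)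
  ultimately show False
    using assms(5) by simp
qed

lemma exp_tail_le:
  fixes A \<epsilon> lam :: real
  assumes "A > 0" "\<epsilon> > 0" "lam > 0"
  obtains T where "T \<ge> 0" "A * exp (- lam * T) \<le> \<epsilon>"
proof -
  define T where "T = max 0 (ln (A / \<epsilon>) / lam)"
  have "ln (A / \<epsilon>) / lam \<le> T"
    by (simp add: T_def)
  then have "ln (A / \<epsilon>) \<le> lam * T"
    using assms(3) by (simp add: divide_le_eq mult.commute)
  then have "A / \<epsilon> \<le> exp (lam * T)"
    using assms by (metis divide_pos_pos exp_le_cancel_iff exp_ln)
  then have "A * exp (- lam * T) \<le> \<epsilon> * exp (lam * T) * exp (- lam * T)"
    using assms(2) by (intro mult_right_mono) (simp_all add: pos_divide_le_eq mult.commute)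
  then show ?thesis
    using that[of T] by (simp add: T_def mult.assoc flip: exp_add)
qed

section \<open>Switching words and switching-time sequences\<close>

definition dur :: "('q \<times> real) list \<Rightarrow> real" where
  "dur w = sum_list (map snd w)"

definition admissible :: "('q \<times> real) list \<Rightarrow> bool" where
  "admissible w \<longleftrightarrow> (\<forall>p\<in>set w. snd p \<ge> 0)"

lemma dur_simps [simp]:
  "dur [] = 0" "dur (p # w) = snd p + dur w" "dur (w1 @ w2) = dur w1 + dur w2"
  by (simp_all add: dur_def)

lemma admissible_simps [simp]:
  "admissible []" "admissible ((q, d) # w) \<longleftrightarrow> d \<ge> 0 \<and> admissible w"
  "admissible (w1 @ w2) \<longleftrightarrow> admissible w1 \<and> admissible w2"
  by (auto simp: admissible_def)

lemma dur_nonneg: "admissible w \<Longrightarrow> dur w \<ge> 0"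
  by (induction w) auto

fun take_dur :: "real \<Rightarrow> ('q \<times> real) list \<Rightarrow> ('q \<times> real) list" where
  "take_dur t [] = []"
| "take_dur t ((q, d) # w) = (if t \<le> d then [(q, t)] else (q, d) # take_dur (t - d) w)"

fun drop_dur :: "real \<Rightarrow> ('q \<times> real) list \<Rightarrow> ('q \<times> real) list" where
  "drop_dur t [] = []"
| "drop_dur t ((q, d) # w) = (if t \<le> d then (q, d - t) # w else drop_dur (t - d) w)"

lemma admissible_take_dur: "admissible w \<Longrightarrow> t \<ge> 0 \<Longrightarrow> admissible (take_dur t w)"
  by (induction t w rule: take_dur.induct) auto

lemma admissible_drop_dur: "admissible w \<Longrightarrow> t \<ge> 0 \<Longrightarrow> admissible (drop_dur t w)"
  by (induction t w rule: drop_dur.induct) auto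

lemma dur_take_dur: "admissible w \<Longrightarrow> 0 \<le> t \<Longrightarrow> t \<le> dur w \<Longrightarrow> dur (take_dur t w) = t"
  by (induction t w rule: take_dur.induct) auto

lemma dur_drop_dur: "admissible w \<Longrightarrow> 0 \<le> t \<Longrightarrow> t \<le> dur w \<Longrightarrow> dur (drop_dur t w) = dur w - t"
  by (induction t w rule: drop_dur.induct) auto

definition cell_index :: "(nat \<Rightarrow> real) \<Rightarrow> real \<Rightarrow> nat" where
  "cell_index ts t = (SOME k. t \<in> {ts k..<ts (Suc k)})"

lemma cell_index_eq:
  assumes "strict_mono ts" "t \<in> {ts k..<ts (Suc k)}"
  shows "cell_index ts t = k"
  unfolding cell_index_def
proof (rule some_equality)
  fix j assume j: "t \<in> {ts j..<ts (Suc j)}"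
  show "j = k"
  proof (rule ccontr)
    assume "j \<noteq> k"
    then have "ts (Suc j) \<le> ts k \<or> ts (Suc k) \<le> ts j"
      using strict_mono_leD[OF assms(1), of "Suc j" k] strict_mono_leD[OF assms(1), of "Suc k" j]
      by linarith
    then show False using j assms(2) by auto
  qed
qed (rule assms(2))

lemma PC_partD:
  assumes "PC_part \<sigma> ts"
  shows "ts 0 = 0" "strict_mono ts" "filterlim ts at_top sequentially"
    "\<And>k t. t \<in> {ts k..<ts (Suc k)} \<Longrightarrow> \<sigma> t = \<sigma> (ts k)"
  using assms unfolding PC_part_def by blast+

lemma PC_part_nonneg: "PC_part \<sigma> ts \<Longrightarrow> ts k \<ge> 0"
  using strict_mono_leD[OF PC_partD(2), of \<sigma> ts 0 k] PC_partD(1) by fastforce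

lemma PC_part_le: "PC_part \<sigma> ts \<Longrightarrow> j \<le> k \<Longrightarrow> ts j \<le> ts k"
  using strict_mono_leD[OF PC_partD(2)] by blast

lemma PC_part_cell_ex:
  assumes "PC_part \<sigma> ts" "t \<ge> 0"
  obtains k where "t \<in> {ts k..<ts (Suc k)}"
proof -
  have "\<exists>j. t < ts j"
    using PC_partD(3)[OF assms(1)] unfolding filterlim_at_top_dense eventually_sequentially
    by (meson order_refl)
  then obtain j where "t < ts j" "\<forall>i<j. \<not> t < ts i"
    using exists_least_iff[of "\<lambda>j. t < ts j"] by blast
  moreover have "j \<noteq> 0"
    using \<open>t < ts j\<close> assms(2) PC_partD(1)[OF assms(1)] by (intro notI) simp
  ultimately show ?thesis
    using that[of "j - 1"] by (cases j) auto
qed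

lemma Dini_up_le_imp_eventually_less:
  assumes "Dini_up r f q V \<psi> \<le> ereal a" "\<epsilon> > 0"
  shows "eventually (\<lambda>h. (V (Tsg r f q h \<psi>) - V \<psi>) / h < a + \<epsilon>) (at_right 0)"
proof -
  have "ereal a < ereal (a + \<epsilon>)"
    using assms(2) by simp
  then show ?thesis
    using assms(1) unfolding Dini_up_def Limsup_le_iff by fastforce
qed

lemma Dini_up_le_limit:
  assumes "eventually (\<lambda>h. (V (Tsg r f q h \<psi>) - V \<psi>) / h \<le> g h) (at_right 0)"
    and "(g \<longlongrightarrow> a) (at_right 0)"
  shows "Dini_up r f q V \<psi> \<le> ereal a"
proof -
  have "Dini_up r f q V \<psi> \<le> Limsup (at_right 0) (\<lambda>h. ereal (g h))"
    unfolding Dini_up_def using assms(1) by (intro Limsup_mono) simp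
  also have "\<dots> = ereal a"
    using assms(2) by (intro lim_imp_Limsup) auto
  finally show ?thesis .
qed

definition continuous_lyapunov_functional_exists ::
    "real \<Rightarrow> ('q \<Rightarrow> (real \<Rightarrow> real^'n) \<Rightarrow> real^'n) \<Rightarrow> bool" where
  "continuous_lyapunov_functional_exists r f \<longleftrightarrow>
     (\<exists>V p cl cu. ccont r V \<and> (\<forall>\<psi>\<in>CC r. V \<psi> \<ge> 0) \<and> p > 0 \<and> cl > 0 \<and> cu > 0 \<and>
        (\<forall>\<psi>\<in>CC r. cl * cnorm r \<psi> powr p \<le> V \<psi> \<and> V \<psi> \<le> cu * cnorm r \<psi> powr p) \<and>
        (\<forall>\<psi>\<in>CC r. \<forall>q. Dini_up r f q V \<psi> \<le> ereal (- (cnorm r \<psi> powr p))))"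

definition bounded_lyapunov_functional_exists ::
    "real \<Rightarrow> ('q \<Rightarrow> (real \<Rightarrow> real^'n) \<Rightarrow> real^'n) \<Rightarrow> bool" where
  "bounded_lyapunov_functional_exists r f \<longleftrightarrow>
     (\<exists>V p c. (\<forall>\<psi>\<in>CC r. V \<psi> \<ge> 0) \<and> p > 0 \<and> c > 0 \<and>
        (\<forall>\<psi>\<in>CC r. \<forall>q. \<forall>t>0. continuous (at_left t) (\<lambda>s. V (Tsg r f q s \<psi>))) \<and>
        (\<forall>\<psi>\<in>CC r. \<forall>q. Dini_up r f q V \<psi> \<le> ereal (- (cnorm r \<psi> powr p))) \<and>
        (\<forall>\<psi>\<in>CC r. V \<psi> \<le> c * cnorm r \<psi> powr p))"

locale switched_retarded_system =
  fixes r :: real and f :: "'q \<Rightarrow> (real \<Rightarrow> real^'n) \<Rightarrow> real^'n" and L :: real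
  assumes r_nonneg: "r \<ge> 0"
    and f_zero: "\<And>q. f q (\<lambda>_. 0) = 0"
    and sol_exists: "\<And>q \<phi>. \<phi> \<in> CC r \<Longrightarrow> \<exists>x. is_sol r f q \<phi> x"
    and sol_unique: "\<And>q \<phi> x y t. \<phi> \<in> CC r \<Longrightarrow> is_sol r f q \<phi> x \<Longrightarrow> is_sol r f q \<phi> y
                       \<Longrightarrow> t \<ge> -r \<Longrightarrow> x t = y t"
    and L_nonneg: "L \<ge> 0"
    and f_lipschitz: "\<And>q \<psi>1 \<psi>2. \<psi>1 \<in> CC r \<Longrightarrow> \<psi>2 \<in> CC r \<Longrightarrow>
                       norm (f q \<psi>1 - f q \<psi>2) \<le> L * cnorm r (\<psi>1 - \<psi>2)"
begin

abbreviation sol :: "'q \<Rightarrow> (real \<Rightarrow> real^'n) \<Rightarrow> real \<Rightarrow> real^'n" where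
  "sol q \<phi> \<equiv> SOME x. is_sol r f q \<phi> x"

lemma is_sol_sol: "\<phi> \<in> CC r \<Longrightarrow> is_sol r f q \<phi> (sol q \<phi>)"
  using sol_exists by (rule someI_ex)

lemma Tsg_eq_seg:
  assumes "\<phi> \<in> CC r" "is_sol r f q \<phi> x" "t \<ge> 0"
  shows "Tsg r f q t \<phi> = seg r x t"
proof -
  have "sol q \<phi> (t + \<theta>) = x (t + \<theta>)" if "\<theta> \<in> {-r..0}" for \<theta>
    using sol_unique[OF assms(1) is_sol_sol[OF assms(1)] assms(2)] that assms(3) by simp
  then show ?thesis
    by (simp add: Tsg_def seg_def fun_eq_iff)
qed

lemma Tsg_CC: "\<phi> \<in> CC r \<Longrightarrow> t \<ge> 0 \<Longrightarrow> Tsg r f q t \<phi> \<in> CC r"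
  using is_sol_sol[of \<phi> q] unfolding Tsg_def is_sol_def by (blast intro: seg_CC)

lemma Tsg_0 [simp]:
  assumes "\<phi> \<in> CC r"
  shows "Tsg r f q 0 \<phi> = \<phi>"
proof
  fix \<theta>
  show "Tsg r f q 0 \<phi> \<theta> = \<phi> \<theta>"
    using is_sol_sol[OF assms, of q] assms by (simp add: Tsg_def seg_def is_sol_def CC_def)
qed

lemma Tsg_apply: "\<theta> \<in> {-r..0} \<Longrightarrow> Tsg r f q t \<phi> \<theta> = sol q \<phi> (t + \<theta>)"
  by (simp add: Tsg_def seg_def)

lemma zero_is_sol: "is_sol r f q (\<lambda>_. 0) (\<lambda>_. 0)"
proof -
  have seg_zero: "seg r (\<lambda>_. 0) t = (\<lambda>_. 0)" for t
    by (simp add: seg_def fun_eq_iff)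
  show ?thesis
    by (simp add: is_sol_def seg_zero f_zero)
qed

lemma Tsg_zero [simp]: "t \<ge> 0 \<Longrightarrow> Tsg r f q t (\<lambda>_. 0) = (\<lambda>_. 0)"
  using Tsg_eq_seg[OF CC_zero zero_is_sol] by (simp add: seg_def fun_eq_iff)

lemma Tsg_add:
  assumes \<phi>: "\<phi> \<in> CC r" and "s \<ge> 0" "t \<ge> 0"
  shows "Tsg r f q t (Tsg r f q s \<phi>) = Tsg r f q (s + t) \<phi>"
proof -
  define x where "x = sol q \<phi>"
  have x: "is_sol r f q \<phi> x"
    unfolding x_def by (rule is_sol_sol[OF \<phi>])
  define y where "y = (\<lambda>\<tau>. x (\<tau> + s))"
  have seg_y: "seg r y \<tau> = seg r x (\<tau> + s)" for \<tau>
    by (simp add: seg_def y_def fun_eq_iff algebra_simps)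
  have "is_sol r f q (Tsg r f q s \<phi>) y"
    unfolding is_sol_def
  proof (intro conjI ballI allI impI)
    show "y \<theta> = Tsg r f q s \<phi> \<theta>" if "\<theta> \<in> {-r..0}" for \<theta>
      using that by (simp add: Tsg_def seg_def y_def x_def add.commute)
    have "continuous_on {-r..} x"
      using x by (simp add: is_sol_def)
    then show "continuous_on {-r..} y"
      unfolding y_def
      by (rule continuous_on_compose2)
        (use \<open>s \<ge> 0\<close> in \<open>auto intro: continuous_on_add continuous_on_id continuous_on_const\<close>)
  next
    fix \<tau> :: real assume "0 \<le> \<tau>"
    have "(x has_vector_derivative f q (seg r x (\<tau> + s))) (at (\<tau> + s) within {0..})"
      using x \<open>0 \<le> \<tau>\<close> \<open>s \<ge> 0\<close> by (simp add: is_sol_def)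
    then have "(x has_vector_derivative f q (seg r x (\<tau> + s))) (at (\<tau> + s) within (\<lambda>\<tau>. \<tau> + s) ` {0..})"
      by (rule has_vector_derivative_within_subset) (use \<open>s \<ge> 0\<close> in auto)
    moreover have "((\<lambda>\<tau>. \<tau> + s) has_vector_derivative 1) (at \<tau> within {0..})"
      by (auto intro!: derivative_eq_intros)
    ultimately have "((x \<circ> (\<lambda>\<tau>. \<tau> + s)) has_vector_derivative f q (seg r x (\<tau> + s))) (at \<tau> within {0..})"
      using vector_diff_chain_within by fastforce
    then show "(y has_vector_derivative f q (seg r y \<tau>)) (at \<tau> within {0..})"
      unfolding seg_y by (simp add: y_def o_def)
  qed
  then have "Tsg r f q t (Tsg r f q s \<phi>) = seg r y t"
    using Tsg_eq_seg Tsg_CC \<phi> assms by blast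
  then show ?thesis
    by (simp add: seg_y Tsg_def x_def add.commute)
qed

lemma norm_sol_diff_le:
  assumes \<phi>: "\<phi> \<in> CC r" and \<psi>: "\<psi> \<in> CC r" and x: "is_sol r f q \<phi> x" and y: "is_sol r f q \<psi> y"
    and "s \<ge> -r"
  shows "norm (x s - y s) \<le> cnorm r (\<phi> - \<psi>) * exp (L * max 0 s)"
proof -
  have init: "norm (x \<theta> - y \<theta>) \<le> cnorm r (\<phi> - \<psi>)" if "\<theta> \<in> {-r..0}" for \<theta>
    using norm_le_cnorm[OF CC_diff[OF \<phi> \<psi>] that] x y that by (simp add: is_sol_def)
  show ?thesis
  proof (cases "s \<le> 0")
    case True
    then show ?thesis
      using init \<open>s \<ge> -r\<close> by simp
  next
    case False
    then have "max 0 s = s"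
      by simp
    show ?thesis
      unfolding \<open>max 0 s = s\<close>
    proof (rule retarded_gronwall[OF r_nonneg L_nonneg _ init])
      show "continuous_on {-r..} (\<lambda>s. x s - y s)"
        using x y by (auto simp: is_sol_def intro: continuous_on_diff)
    next
      fix u :: real assume "u \<ge> 0"
      then show "((\<lambda>s. x s - y s) has_vector_derivative f q (seg r x u) - f q (seg r y u))
          (at u within {u..})"
        using x y by (auto simp: is_sol_def intro!: has_vector_derivative_diff
            intro: has_vector_derivative_within_subset[of _ _ _ "{0..}"])
      have "cnorm r (seg r x u - seg r y u) = (SUP \<theta>\<in>{-r..0}. norm (x (u + \<theta>) - y (u + \<theta>)))"
        unfolding cnorm_def by (rule SUP_cong) (simp_all add: seg_def)
      moreover have "seg r x u \<in> CC r" "seg r y u \<in> CC r"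
        using x y \<open>u \<ge> 0\<close> by (auto simp: is_sol_def intro: seg_CC)
      ultimately show "norm (f q (seg r x u) - f q (seg r y u))
          \<le> L * (SUP \<theta>\<in>{-r..0}. norm (x (u + \<theta>) - y (u + \<theta>)))"
        using f_lipschitz[of "seg r x u" "seg r y u" q] by simp
    qed (use False in auto)
  qed
qed

lemma cnorm_Tsg_diff_le:
  assumes \<phi>: "\<phi> \<in> CC r" and \<psi>: "\<psi> \<in> CC r" and "t \<ge> 0"
  shows "cnorm r (Tsg r f q t \<phi> - Tsg r f q t \<psi>) \<le> exp (L * t) * cnorm r (\<phi> - \<psi>)"
proof (rule cnorm_leI[OF r_nonneg])
  fix \<theta> assume \<theta>: "\<theta> \<in> {-r..0}"
  have "norm ((Tsg r f q t \<phi> - Tsg r f q t \<psi>) \<theta>) = norm (sol q \<phi> (t + \<theta>) - sol q \<psi> (t + \<theta>))"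
    using \<theta> by (simp add: Tsg_apply)
  also have "\<dots> \<le> cnorm r (\<phi> - \<psi>) * exp (L * max 0 (t + \<theta>))"
    using \<theta> \<open>t \<ge> 0\<close> by (intro norm_sol_diff_le[OF \<phi> \<psi> is_sol_sol[OF \<phi>] is_sol_sol[OF \<psi>]]) auto
  also have "\<dots> \<le> cnorm r (\<phi> - \<psi>) * exp (L * t)"
    using \<theta> \<open>t \<ge> 0\<close> L_nonneg cnorm_nonneg[OF r_nonneg CC_diff[OF \<phi> \<psi>]]
    by (intro mult_left_mono) (simp_all add: mult_left_mono)
  finally show "norm ((Tsg r f q t \<phi> - Tsg r f q t \<psi>) \<theta>) \<le> exp (L * t) * cnorm r (\<phi> - \<psi>)"
    by (simp add: mult.commute)
qed

lemma Tsg_continuous: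
  assumes \<phi>: "\<phi> \<in> CC r" and "t \<ge> 0" "\<epsilon> > 0"
  shows "\<exists>\<delta>>0. \<forall>s\<ge>0. \<bar>s - t\<bar> < \<delta> \<longrightarrow> cnorm r (Tsg r f q s \<phi> - Tsg r f q t \<phi>) < \<epsilon>"
proof -
  define x where "x = sol q \<phi>"
  have "continuous_on {-r..t + 1} x"
    using is_sol_sol[OF \<phi>, of q] by (auto simp: is_sol_def x_def elim: continuous_on_subset)
  then have "uniformly_continuous_on {-r..t + 1} x"
    by (rule compact_uniformly_continuous) simp
  then obtain d where "d > 0" and
    d: "\<And>a b. a \<in> {-r..t + 1} \<Longrightarrow> b \<in> {-r..t + 1} \<Longrightarrow> dist b a < d \<Longrightarrow> dist (x b) (x a) < \<epsilon> / 2"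
    unfolding uniformly_continuous_on_def using \<open>\<epsilon> > 0\<close> by (metis half_gt_zero)
  have "cnorm r (Tsg r f q s \<phi> - Tsg r f q t \<phi>) \<le> \<epsilon> / 2" if "s \<ge> 0" "\<bar>s - t\<bar> < min d 1" for s
  proof (rule cnorm_leI[OF r_nonneg])
    fix \<theta> assume "\<theta> \<in> {-r..0}"
    moreover have "s < t + 1" "dist (s + \<theta>) (t + \<theta>) < d"
      using that by (auto simp: dist_real_def)
    ultimately show "norm ((Tsg r f q s \<phi> - Tsg r f q t \<phi>) \<theta>) \<le> \<epsilon> / 2"
      using d[of "t + \<theta>" "s + \<theta>"] that \<open>t \<ge> 0\<close> by (simp add: Tsg_apply x_def dist_norm)
  qed
  then show ?thesis
    using \<open>d > 0\<close> \<open>\<epsilon> > 0\<close> by (intro exI[of _ "min d 1"]) force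
qed

section \<open>Switched trajectories as runs of words\<close>

fun run :: "('q \<times> real) list \<Rightarrow> (real \<Rightarrow> real^'n) \<Rightarrow> (real \<Rightarrow> real^'n)" where
  "run [] \<psi> = \<psi>"
| "run ((q, d) # w) \<psi> = run w (Tsg r f q d \<psi>)"

lemma run_append: "run (w1 @ w2) \<psi> = run w2 (run w1 \<psi>)"
  by (induction w1 arbitrary: \<psi>) auto

lemma run_CC: "admissible w \<Longrightarrow> \<psi> \<in> CC r \<Longrightarrow> run w \<psi> \<in> CC r"
  by (induction w arbitrary: \<psi>) (auto simp: Tsg_CC)

lemma run_zero [simp]: "admissible w \<Longrightarrow> run w (\<lambda>_. 0) = (\<lambda>_. 0)"
  by (induction w) auto

lemma cnorm_run_diff_le:
  "admissible w \<Longrightarrow> \<phi> \<in> CC r \<Longrightarrow> \<psi> \<in> CC r \<Longrightarrow>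
     cnorm r (run w \<phi> - run w \<psi>) \<le> exp (L * dur w) * cnorm r (\<phi> - \<psi>)"
proof (induction w arbitrary: \<phi> \<psi>)
  case (Cons p w)
  obtain q d where p: "p = (q, d)" by (cases p)
  with Cons.prems have "d \<ge> 0" "admissible w" by auto
  then have "cnorm r (run (p # w) \<phi> - run (p # w) \<psi>)
      \<le> exp (L * dur w) * cnorm r (Tsg r f q d \<phi> - Tsg r f q d \<psi>)"
    unfolding p run.simps using Cons by (intro Cons.IH Tsg_CC) auto
  also have "\<dots> \<le> exp (L * dur w) * (exp (L * d) * cnorm r (\<phi> - \<psi>))"
    using Cons.prems \<open>d \<ge> 0\<close> by (intro mult_left_mono cnorm_Tsg_diff_le) auto
  also have "\<dots> = exp (L * dur (p # w)) * cnorm r (\<phi> - \<psi>)"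
    by (simp add: p algebra_simps flip: exp_add)
  finally show ?case .
qed simp

lemma cnorm_run_le: "admissible w \<Longrightarrow> \<phi> \<in> CC r \<Longrightarrow> cnorm r (run w \<phi>) \<le> exp (L * dur w) * cnorm r \<phi>"
  using cnorm_run_diff_le[of w \<phi> "\<lambda>_. 0"] by simp

lemma run_take_drop_dur:
  "admissible w \<Longrightarrow> 0 \<le> t \<Longrightarrow> \<psi> \<in> CC r \<Longrightarrow> run w \<psi> = run (drop_dur t w) (run (take_dur t w) \<psi>)"
proof (induction t w arbitrary: \<psi> rule: take_dur.induct)
  case (2 t q d w)
  show ?case
  proof (cases "t \<le> d")
    case True
    then show ?thesis
      using Tsg_add[OF 2(4), of t "d - t" q] 2(3) by simp
  next
    case False
    then show ?thesis
      using 2 by (simp add: Tsg_CC)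
  qed
qed simp

lemma run_take_dur_0 [simp]: "admissible w \<Longrightarrow> \<psi> \<in> CC r \<Longrightarrow> run (take_dur 0 w) \<psi> = \<psi>"
  by (cases w) auto

text \<open>\<open>flow\<close> uses a partition chosen by \<open>SOME\<close>; \<open>flow_part\<close> takes the partition as an
  argument, and \<open>flow_part_indep\<close> below shows that the choice does not matter.\<close>

definition flow_part :: "(real \<Rightarrow> 'q) \<Rightarrow> (nat \<Rightarrow> real) \<Rightarrow> (real \<Rightarrow> real^'n) \<Rightarrow> real \<Rightarrow> (real \<Rightarrow> real^'n)" where
  "flow_part \<sigma> ts \<psi> t = (let k = cell_index ts t in Tsg r f (\<sigma> (ts k)) (t - ts k) (flow_at r f \<sigma> ts k \<psi>))"

lemma flow_eq_flow_part: "flow r f t \<psi> \<sigma> = flow_part \<sigma> (SOME ts. PC_part \<sigma> ts) \<psi> t"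
  by (simp add: flow_def flow_part_def cell_index_def Let_def)

lemma flow_part_cell:
  "strict_mono ts \<Longrightarrow> t \<in> {ts k..<ts (Suc k)} \<Longrightarrow>
     flow_part \<sigma> ts \<psi> t = Tsg r f (\<sigma> (ts k)) (t - ts k) (flow_at r f \<sigma> ts k \<psi>)"
  by (simp add: flow_part_def cell_index_eq)

lemma flow_at_CC: "PC_part \<sigma> ts \<Longrightarrow> \<psi> \<in> CC r \<Longrightarrow> flow_at r f \<sigma> ts k \<psi> \<in> CC r"
  by (induction k) (auto intro!: Tsg_CC simp: PC_part_le)

lemma flow_part_closed_cell:
  assumes P: "PC_part \<sigma> ts" and "\<psi> \<in> CC r" "t \<in> {ts k..ts (Suc k)}"
  shows "flow_part \<sigma> ts \<psi> t = Tsg r f (\<sigma> (ts k)) (t - ts k) (flow_at r f \<sigma> ts k \<psi>)"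
proof (cases "t = ts (Suc k)")
  case True
  have cell: "t \<in> {ts (Suc k)..<ts (Suc (Suc k))}"
    using True strict_monoD[OF PC_partD(2)[OF P], of "Suc k" "Suc (Suc k)"] by simp
  show ?thesis
    using True flow_part_cell[OF PC_partD(2)[OF P] cell] flow_at_CC[OF P \<open>\<psi> \<in> CC r\<close>, of "Suc k"]
    by simp
qed (use assms flow_part_cell[OF PC_partD(2)[OF P]] in auto)

lemma flow_part_node: "PC_part \<sigma> ts \<Longrightarrow> \<psi> \<in> CC r \<Longrightarrow> flow_part \<sigma> ts \<psi> (ts k) = flow_at r f \<sigma> ts k \<psi>"
  using flow_part_closed_cell[of \<sigma> ts \<psi> "ts k" k] flow_at_CC PC_part_le[of \<sigma> ts k "Suc k"] by simp

lemma flow_part_CC: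
  assumes "PC_part \<sigma> ts" "\<psi> \<in> CC r" "t \<ge> 0"
  shows "flow_part \<sigma> ts \<psi> t \<in> CC r"
proof -
  obtain k where "t \<in> {ts k..<ts (Suc k)}"
    using PC_part_cell_ex[OF assms(1,3)] .
  then show ?thesis
    using flow_part_cell[OF PC_partD(2)[OF assms(1)]] by (auto intro!: Tsg_CC flow_at_CC assms)
qed

lemma flow_part_shift:
  assumes P: "PC_part \<sigma> ts" and \<psi>: "\<psi> \<in> CC r"
    and a: "a \<in> {ts k..ts (Suc k)}" and "a \<le> b" "b \<le> ts (Suc k)"
  shows "flow_part \<sigma> ts \<psi> b = Tsg r f (\<sigma> (ts k)) (b - a) (flow_part \<sigma> ts \<psi> a)"
proof -
  have "flow_part \<sigma> ts \<psi> b = Tsg r f (\<sigma> (ts k)) (a - ts k + (b - a)) (flow_at r f \<sigma> ts k \<psi>)"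
    using flow_part_closed_cell[OF P \<psi>, of b k] assms by simp
  also have "\<dots> = Tsg r f (\<sigma> (ts k)) (b - a) (Tsg r f (\<sigma> (ts k)) (a - ts k) (flow_at r f \<sigma> ts k \<psi>))"
    using Tsg_add flow_at_CC[OF P \<psi>] assms by simp
  also have "Tsg r f (\<sigma> (ts k)) (a - ts k) (flow_at r f \<sigma> ts k \<psi>) = flow_part \<sigma> ts \<psi> a"
    using flow_part_closed_cell[OF P \<psi> a] by simp
  finally show ?thesis .
qed

lemma flow_part_const_upto:
  assumes P: "PC_part \<sigma> ts" and \<psi>: "\<psi> \<in> CC r" and "0 \<le> a"
  shows "a \<le> b \<Longrightarrow> b \<le> ts j \<Longrightarrow> \<forall>s\<in>{a..<b}. \<sigma> s = q \<Longrightarrow>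
           flow_part \<sigma> ts \<psi> b = Tsg r f q (b - a) (flow_part \<sigma> ts \<psi> a)"
proof (induction j arbitrary: b)
  have a_CC: "flow_part \<sigma> ts \<psi> a \<in> CC r"
    using flow_part_CC[OF P \<psi> \<open>0 \<le> a\<close>] .
  {
    case 0
    with \<open>0 \<le> a\<close> PC_partD(1)[OF P] have "b = a" by simp
    then show ?case using a_CC by simp
  next
    case (Suc j)
    consider "b \<le> ts j" | "a = b" | "ts j < b" "a < b"
      using Suc.prems(1) by linarith
    then show ?case
    proof cases
      case 1
      then show ?thesis
        using Suc.prems by (intro Suc.IH) auto
    next
      case 2
      then show ?thesis
        using a_CC by simp
    next
      case 3
      define c where "c = max a (ts j)"
      have c: "a \<le> c" "c < b" "ts j \<le> c" "c \<le> ts j \<or> c = a" "c \<le> ts (Suc j)"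
        using 3 Suc.prems(2) by (auto simp: c_def)
      have "flow_part \<sigma> ts \<psi> c = Tsg r f q (c - a) (flow_part \<sigma> ts \<psi> a)"
        using Suc.IH[of c] c Suc.prems(3) a_CC by (cases "c = a") simp_all
      moreover have "\<sigma> (ts j) = q"
        using Suc.prems(2,3) c PC_partD(4)[OF P, of c j] by simp
      moreover have "flow_part \<sigma> ts \<psi> b = Tsg r f (\<sigma> (ts j)) (b - c) (flow_part \<sigma> ts \<psi> c)"
        using flow_part_shift[OF P \<psi>, of c j b] c Suc.prems(2) by simp
      ultimately show ?thesis
        using Tsg_add[OF a_CC, of "c - a" "b - c" q] c by simp
    qed
  }
qed

lemma flow_part_const:
  assumes P: "PC_part \<sigma> ts" and \<psi>: "\<psi> \<in> CC r" and "0 \<le> a" "a \<le> b"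
    and const: "\<And>s. s \<in> {a..<b} \<Longrightarrow> \<sigma> s = q"
  shows "flow_part \<sigma> ts \<psi> b = Tsg r f q (b - a) (flow_part \<sigma> ts \<psi> a)"
proof -
  obtain k where "b \<in> {ts k..<ts (Suc k)}"
    using PC_part_cell_ex[OF P, of b] assms(3,4) by auto
  then show ?thesis
    using flow_part_const_upto[OF P \<psi> \<open>0 \<le> a\<close> \<open>a \<le> b\<close>, of "Suc k"] const by simp
qed

lemma flow_part_indep:
  assumes P: "PC_part \<sigma> ts" and P': "PC_part \<sigma> ts'" and \<psi>: "\<psi> \<in> CC r" and "t \<ge> 0"
  shows "flow_part \<sigma> ts' \<psi> t = flow_part \<sigma> ts \<psi> t"
proof -
  have nodes: "flow_part \<sigma> ts' \<psi> (ts k) = flow_part \<sigma> ts \<psi> (ts k)" for k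
  proof (induction k)
    case 0
    then show ?case
      using flow_part_node[OF P \<psi>, of 0] flow_part_node[OF P' \<psi>, of 0] PC_partD(1)[OF P] PC_partD(1)[OF P']
      by simp
  next
    case (Suc k)
    have "ts k \<le> ts (Suc k)"
      using PC_part_le[OF P] by simp
    note const = PC_partD(4)[OF P, of _ k]
    show ?case
      using flow_part_const[OF P \<psi> PC_part_nonneg[OF P] \<open>ts k \<le> ts (Suc k)\<close> const]
        flow_part_const[OF P' \<psi> PC_part_nonneg[OF P] \<open>ts k \<le> ts (Suc k)\<close> const] Suc
      by simp
  qed
  obtain k where k: "t \<in> {ts k..<ts (Suc k)}"
    using PC_part_cell_ex[OF P \<open>t \<ge> 0\<close>] .
  then have "ts k \<le> t" and const: "\<And>s. s \<in> {ts k..<t} \<Longrightarrow> \<sigma> s = \<sigma> (ts k)"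
    by (auto intro: PC_partD(4)[OF P])
  then show ?thesis
    using flow_part_const[OF P \<psi> PC_part_nonneg[OF P] \<open>ts k \<le> t\<close> const]
      flow_part_const[OF P' \<psi> PC_part_nonneg[OF P] \<open>ts k \<le> t\<close> const] nodes[of k]
    by simp
qed

definition part_word :: "(real \<Rightarrow> 'q) \<Rightarrow> (nat \<Rightarrow> real) \<Rightarrow> nat \<Rightarrow> ('q \<times> real) list" where
  "part_word \<sigma> ts k = map (\<lambda>j. (\<sigma> (ts j), ts (Suc j) - ts j)) [0..<k]"

lemma part_word_Suc: "part_word \<sigma> ts (Suc k) = part_word \<sigma> ts k @ [(\<sigma> (ts k), ts (Suc k) - ts k)]"
  by (simp add: part_word_def)

lemma flow_at_eq_run: "flow_at r f \<sigma> ts k \<psi> = run (part_word \<sigma> ts k) \<psi>"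
  by (induction k) (simp_all add: part_word_Suc run_append, simp add: part_word_def)

lemma dur_part_word: "dur (part_word \<sigma> ts k) = ts k - ts 0"
  by (induction k) (simp_all add: part_word_Suc, simp add: part_word_def)

lemma admissible_part_word: "strict_mono ts \<Longrightarrow> admissible (part_word \<sigma> ts k)"
  by (induction k) (simp add: part_word_def, simp add: part_word_Suc strict_mono_leD)

lemma flow_eq_run:
  assumes "\<sigma> \<in> PC" "t \<ge> 0" "\<psi> \<in> CC r"
  obtains w where "admissible w" "dur w = t" "flow r f t \<psi> \<sigma> = run w \<psi>"
proof -
  define ts where "ts = (SOME ts. PC_part \<sigma> ts)"
  have P: "PC_part \<sigma> ts"
    using assms(1) someI_ex[of "PC_part \<sigma>"] unfolding ts_def PC_def by blast
  obtain k where k: "t \<in> {ts k..<ts (Suc k)}"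
    using PC_part_cell_ex[OF P assms(2)] .
  have "flow r f t \<psi> \<sigma> = run (part_word \<sigma> ts k @ [(\<sigma> (ts k), t - ts k)]) \<psi>"
    using flow_part_cell[OF PC_partD(2)[OF P] k]
    by (simp add: flow_eq_flow_part ts_def[symmetric] run_append flow_at_eq_run)
  moreover have "admissible (part_word \<sigma> ts k @ [(\<sigma> (ts k), t - ts k)])"
    using admissible_part_word[OF PC_partD(2)[OF P]] k by simp
  moreover have "dur (part_word \<sigma> ts k @ [(\<sigma> (ts k), t - ts k)]) = t"
    using PC_partD(1)[OF P] by (simp add: dur_part_word)
  ultimately show ?thesis
    using that by blast
qed

text \<open>Past the end of \<open>w\<close> the switching times advance in unit steps so that they are unbounded.\<close>

definition word_times :: "('q \<times> real) list \<Rightarrow> nat \<Rightarrow> real" where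
  "word_times w j = (if j \<le> length w then dur (take j w) else dur w + real (j - length w))"

definition word_signal :: "('q \<times> real) list \<Rightarrow> real \<Rightarrow> 'q" where
  "word_signal w t = fst (w ! cell_index (word_times w) t)"

lemma word_times_Suc:
  "word_times w (Suc j) = word_times w j + (if j < length w then snd (w ! j) else 1)"
  by (cases "Suc j \<le> length w") (auto simp: word_times_def take_Suc_conv_app_nth Suc_diff_le)

lemma PC_part_word_signal:
  assumes pos: "\<forall>p\<in>set w. snd p > 0"
  shows "PC_part (word_signal w) (word_times w)"
proof -
  have mono: "strict_mono (word_times w)"
    using pos by (auto simp: strict_mono_Suc_iff word_times_Suc)
  have "admissible w"
    using pos by (auto simp: admissible_def less_imp_le)
  have "real j - real (length w) \<le> word_times w j" for j
  proof (cases "j \<le> length w")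
    case True
    have "admissible (take j w)"
      using \<open>admissible w\<close> by (auto simp: admissible_def dest: in_set_takeD)
    moreover have "real j \<le> real (length w)"
      using True by simp
    ultimately show ?thesis
      using True dur_nonneg[of "take j w"] by (simp add: word_times_def)
  qed (use dur_nonneg[OF \<open>admissible w\<close>] in \<open>simp add: word_times_def\<close>)
  then have "filterlim (word_times w) at_top sequentially"
    by (intro filterlim_at_top_mono[OF filterlim_tendsto_add_at_top[OF
          tendsto_const[of "- real (length w)"] filterlim_real_sequentially]] always_eventually) simp
  moreover have "word_signal w t = word_signal w (word_times w k)"
    if t: "t \<in> {word_times w k..<word_times w (Suc k)}" for k t
  proof -
    have "cell_index (word_times w) (word_times w k) = k"
      using t by (intro cell_index_eq[OF mono]) auto
    then show ?thesis
      using cell_index_eq[OF mono t] by (simp add: word_signal_def)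
  qed
  ultimately show ?thesis
    using mono by (simp add: PC_part_def word_times_def)
qed

lemma part_word_word_signal:
  assumes "\<forall>p\<in>set w. snd p > 0"
  shows "part_word (word_signal w) (word_times w) (length w) = w"
proof (rule nth_equalityI)
  have mono: "strict_mono (word_times w)"
    using PC_partD(2)[OF PC_part_word_signal[OF assms]] .
  fix i assume "i < length (part_word (word_signal w) (word_times w) (length w))"
  then have "i < length w"
    by (simp add: part_word_def)
  then show "part_word (word_signal w) (word_times w) (length w) ! i = w ! i"
    using cell_index_eq[OF mono, of "word_times w i" i] strict_monoD[OF mono, of i "Suc i"]
    by (simp add: part_word_def word_signal_def word_times_Suc)
qed (simp add: part_word_def)

lemma flow_word_signal:
  assumes "\<forall>p\<in>set w. snd p > 0" "\<psi> \<in> CC r"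
  shows "flow r f (dur w) \<psi> (word_signal w) = run w \<psi>"
proof -
  note P = PC_part_word_signal[OF assms(1)]
  have "admissible w"
    using assms(1) by (auto simp: admissible_def less_imp_le)
  then have "flow r f (dur w) \<psi> (word_signal w) = flow_part (word_signal w) (word_times w) \<psi> (dur w)"
    unfolding flow_eq_flow_part
    by (intro flow_part_indep[OF P someI[of "PC_part (word_signal w)", OF P] assms(2)] dur_nonneg)
  also have "\<dots> = run w \<psi>"
    using flow_part_node[OF P assms(2), of "length w"] part_word_word_signal[OF assms(1)]
    by (simp add: word_times_def flow_at_eq_run)
  finally show ?thesis .
qed

lemma run_remove_null_durations:
  "admissible w \<Longrightarrow> \<psi> \<in> CC r \<Longrightarrow> run (filter (\<lambda>p. snd p \<noteq> 0) w) \<psi> = run w \<psi>"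
  by (induction w arbitrary: \<psi>) (auto simp: Tsg_CC)

lemma dur_remove_null_durations: "dur (filter (\<lambda>p. snd p \<noteq> 0) w) = dur w"
  by (induction w) auto

lemma run_eq_flow:
  assumes "admissible w" "\<psi> \<in> CC r"
  obtains \<sigma> where "\<sigma> \<in> PC" "flow r f (dur w) \<psi> \<sigma> = run w \<psi>"
proof -
  define w' where "w' = filter (\<lambda>p. snd p \<noteq> 0) w"
  have pos: "\<forall>p\<in>set w'. snd p > 0"
    using assms(1) by (auto simp: w'_def admissible_def less_le)
  then have "word_signal w' \<in> PC"
    using PC_part_word_signal unfolding PC_def by blast
  moreover have "flow r f (dur w) \<psi> (word_signal w') = run w \<psi>"
    using flow_word_signal[OF pos assms(2)] run_remove_null_durations[OF assms]
    by (simp add: w'_def dur_remove_null_durations)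
  ultimately show ?thesis
    by (rule that)
qed

lemma UGES_iff_word_estimate:
  "UGES r f \<longleftrightarrow> (\<exists>M>0. \<exists>lam>0. \<forall>w \<psi>. admissible w \<longrightarrow> \<psi> \<in> CC r \<longrightarrow>
      cnorm r (run w \<psi>) \<le> M * exp (- lam * dur w) * cnorm r \<psi>)"
proof
  assume "UGES r f"
  then obtain M lam where "M > 0" "lam > 0" and est: "\<forall>t\<ge>0. \<forall>\<phi>\<in>CC r. \<forall>\<sigma>\<in>PC.
      cnorm r (flow r f t \<phi> \<sigma>) \<le> M * exp (- lam * t) * cnorm r \<phi>"
    unfolding UGES_def by blast
  have "cnorm r (run w \<psi>) \<le> M * exp (- lam * dur w) * cnorm r \<psi>"
    if w: "admissible w" and \<psi>: "\<psi> \<in> CC r" for w \<psi>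
  proof -
    obtain \<sigma> where \<sigma>: "\<sigma> \<in> PC" and eq: "flow r f (dur w) \<psi> \<sigma> = run w \<psi>"
      using run_eq_flow[OF w \<psi>] .
    show ?thesis
      using est[rule_format, OF dur_nonneg[OF w] \<psi> \<sigma>] unfolding eq .
  qed
  then show "\<exists>M>0. \<exists>lam>0. \<forall>w \<psi>. admissible w \<longrightarrow> \<psi> \<in> CC r \<longrightarrow>
      cnorm r (run w \<psi>) \<le> M * exp (- lam * dur w) * cnorm r \<psi>"
    using \<open>M > 0\<close> \<open>lam > 0\<close> by blast
next
  assume "\<exists>M>0. \<exists>lam>0. \<forall>w \<psi>. admissible w \<longrightarrow> \<psi> \<in> CC r \<longrightarrow>
      cnorm r (run w \<psi>) \<le> M * exp (- lam * dur w) * cnorm r \<psi>"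
  then obtain M lam where "M > 0" "lam > 0" and
    est: "\<And>w \<psi>. admissible w \<Longrightarrow> \<psi> \<in> CC r \<Longrightarrow> cnorm r (run w \<psi>) \<le> M * exp (- lam * dur w) * cnorm r \<psi>"
    by blast
  have "cnorm r (flow r f t \<phi> \<sigma>) \<le> M * exp (- lam * t) * cnorm r \<phi>"
    if t: "t \<ge> 0" and \<phi>: "\<phi> \<in> CC r" and \<sigma>: "\<sigma> \<in> PC" for t \<phi> \<sigma>
  proof -
    obtain w where "admissible w" "dur w = t" "flow r f t \<phi> \<sigma> = run w \<phi>"
      using flow_eq_run[OF \<sigma> t \<phi>] .
    then show ?thesis
      using est[of w \<phi>] \<phi> by simp
  qed
  then show "UGES r f"
    unfolding UGES_def using \<open>M > 0\<close> \<open>lam > 0\<close> by blast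
qed

section \<open>A Lyapunov functional for an exponentially stable system\<close>

context
  fixes M lam :: real
  assumes M_pos: "M > 0" and lam_pos: "lam > 0"
    and decay: "\<And>w \<psi>. admissible w \<Longrightarrow> \<psi> \<in> CC r \<Longrightarrow>
                  cnorm r (run w \<psi>) \<le> M * exp (- 2 * lam * dur w) * cnorm r \<psi>"
begin

text \<open>Weighting with half the decay rate keeps the supremum finite and makes it continuous.\<close>

definition lyapunov_sup :: "(real \<Rightarrow> real^'n) \<Rightarrow> real" where
  "lyapunov_sup \<psi> = (SUP w\<in>{w. admissible w}. exp (lam * dur w) * cnorm r (run w \<psi>))"

lemma weighted_run_le:
  assumes "admissible w" "\<psi> \<in> CC r"
  shows "exp (lam * dur w) * cnorm r (run w \<psi>) \<le> M * exp (- lam * dur w) * cnorm r \<psi>"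
proof -
  have "exp (lam * dur w) * cnorm r (run w \<psi>)
      \<le> exp (lam * dur w) * (M * exp (- 2 * lam * dur w) * cnorm r \<psi>)"
    using decay[OF assms] by (rule mult_left_mono) simp
  also have "\<dots> = M * exp (- lam * dur w) * cnorm r \<psi>"
    by (simp add: algebra_simps flip: exp_add)
  finally show ?thesis .
qed

lemma weighted_run_le_cnorm:
  assumes "admissible w" "\<psi> \<in> CC r"
  shows "exp (lam * dur w) * cnorm r (run w \<psi>) \<le> M * cnorm r \<psi>"
proof -
  have "M * exp (- lam * dur w) * cnorm r \<psi> \<le> M * 1 * cnorm r \<psi>"
    using M_pos lam_pos dur_nonneg[OF assms(1)] cnorm_nonneg[OF r_nonneg assms(2)]
    by (intro mult_right_mono mult_left_mono) auto
  then show ?thesis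
    using weighted_run_le[OF assms] by simp
qed

lemma lyapunov_sup_ge:
  "admissible w \<Longrightarrow> \<psi> \<in> CC r \<Longrightarrow> exp (lam * dur w) * cnorm r (run w \<psi>) \<le> lyapunov_sup \<psi>"
  unfolding lyapunov_sup_def
  by (rule cSUP_upper) (auto intro!: bdd_aboveI2 weighted_run_le_cnorm)

lemma lyapunov_sup_le:
  "(\<And>w. admissible w \<Longrightarrow> exp (lam * dur w) * cnorm r (run w \<psi>) \<le> B) \<Longrightarrow> lyapunov_sup \<psi> \<le> B"
  unfolding lyapunov_sup_def by (rule cSUP_least) (auto intro: admissible_simps(1))

lemma cnorm_le_lyapunov_sup: "\<psi> \<in> CC r \<Longrightarrow> cnorm r \<psi> \<le> lyapunov_sup \<psi>"
  using lyapunov_sup_ge[of "[]" \<psi>] by simp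

lemma lyapunov_sup_le_cnorm: "\<psi> \<in> CC r \<Longrightarrow> lyapunov_sup \<psi> \<le> M * cnorm r \<psi>"
  by (intro lyapunov_sup_le weighted_run_le_cnorm)

lemma lyapunov_sup_Tsg:
  assumes "\<psi> \<in> CC r" "h \<ge> 0"
  shows "lyapunov_sup (Tsg r f q h \<psi>) \<le> exp (- lam * h) * lyapunov_sup \<psi>"
proof (rule lyapunov_sup_le)
  fix w :: "('q \<times> real) list" assume "admissible w"
  have "exp (lam * dur w) * cnorm r (run w (Tsg r f q h \<psi>)) =
      exp (- lam * h) * (exp (lam * dur ((q, h) # w)) * cnorm r (run ((q, h) # w) \<psi>))"
    by (simp add: algebra_simps flip: exp_add)
  also have "\<dots> \<le> exp (- lam * h) * lyapunov_sup \<psi>"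
    using \<open>admissible w\<close> assms by (intro mult_left_mono lyapunov_sup_ge) auto
  finally show "exp (lam * dur w) * cnorm r (run w (Tsg r f q h \<psi>)) \<le> exp (- lam * h) * lyapunov_sup \<psi>" .
qed

lemma weighted_run_diff_le_short:
  assumes "admissible w" "\<psi> \<in> CC r" "\<phi> \<in> CC r"
  shows "exp (lam * dur w) * cnorm r (run w \<psi> - run w \<phi>) \<le> exp ((lam + L) * dur w) * cnorm r (\<psi> - \<phi>)"
proof -
  have "exp (lam * dur w) * cnorm r (run w \<psi> - run w \<phi>)
      \<le> exp (lam * dur w) * (exp (L * dur w) * cnorm r (\<psi> - \<phi>))"
    using cnorm_run_diff_le[OF assms] by (rule mult_left_mono) simp
  then show ?thesis
    by (simp add: algebra_simps flip: exp_add)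
qed

lemma weighted_run_diff_le_long:
  assumes w: "admissible w" and \<psi>: "\<psi> \<in> CC r" and \<phi>: "\<phi> \<in> CC r"
  shows "exp (lam * dur w) * cnorm r (run w \<psi> - run w \<phi>)
           \<le> M * exp (- lam * dur w) * (cnorm r \<psi> + cnorm r \<phi>)"
proof -
  have "exp (lam * dur w) * cnorm r (run w \<psi> - run w \<phi>)
      \<le> exp (lam * dur w) * cnorm r (run w \<psi>) + exp (lam * dur w) * cnorm r (run w \<phi>)"
    using cnorm_diff_le[OF r_nonneg run_CC[OF w \<psi>] run_CC[OF w \<phi>]]
    by (simp add: mult_left_mono flip: distrib_left)
  also have "\<dots> \<le> M * exp (- lam * dur w) * cnorm r \<psi> + M * exp (- lam * dur w) * cnorm r \<phi>"
    using w \<psi> \<phi> by (intro add_mono weighted_run_le)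
  finally show ?thesis
    by (simp add: distrib_left)
qed

lemma weighted_run_diff_small:
  assumes \<phi>: "\<phi> \<in> CC r" and "\<epsilon> > 0"
  obtains \<delta> where "\<delta> > 0" and "\<And>\<psi> w. \<psi> \<in> CC r \<Longrightarrow> cnorm r (\<psi> - \<phi>) < \<delta> \<Longrightarrow> admissible w \<Longrightarrow>
      exp (lam * dur w) * cnorm r (run w \<psi> - run w \<phi>) \<le> \<epsilon>"
proof -
  define A where "A = M * (2 * cnorm r \<phi> + 1)"
  have "A > 0"
    using M_pos cnorm_nonneg[OF r_nonneg \<phi>] by (simp add: A_def)
  obtain T where "T \<ge> 0" and tail: "A * exp (- lam * T) \<le> \<epsilon>"
    using exp_tail_le[OF \<open>A > 0\<close> \<open>\<epsilon> > 0\<close> lam_pos] by blast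
  define \<delta> where "\<delta> = min 1 (\<epsilon> * exp (- ((lam + L) * T)))"
  have "\<delta> > 0"
    using \<open>\<epsilon> > 0\<close> by (simp add: \<delta>_def)
  moreover have "exp (lam * dur w) * cnorm r (run w \<psi> - run w \<phi>) \<le> \<epsilon>"
    if \<psi>: "\<psi> \<in> CC r" and close: "cnorm r (\<psi> - \<phi>) < \<delta>" and w: "admissible w" for \<psi> w
  proof (cases "dur w \<le> T")
    case True
    have "exp ((lam + L) * dur w) * cnorm r (\<psi> - \<phi>) \<le> exp ((lam + L) * T) * (\<epsilon> * exp (- ((lam + L) * T)))"
      using True close lam_pos L_nonneg cnorm_nonneg[OF r_nonneg CC_diff[OF \<psi> \<phi>]]
      by (intro mult_mono) (auto simp: \<delta>_def mult_left_mono)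
    also have "\<dots> = \<epsilon>"
      by (simp add: exp_minus_inverse mult.left_commute)
    finally show ?thesis
      using weighted_run_diff_le_short[OF w \<psi> \<phi>] by linarith
  next
    case False
    have "cnorm r \<psi> \<le> cnorm r \<phi> + 1"
      using cnorm_le_add_diff[OF r_nonneg \<psi> \<phi>] close by (simp add: \<delta>_def)
    then have "M * exp (- lam * dur w) * (cnorm r \<psi> + cnorm r \<phi>)
        \<le> M * exp (- lam * T) * (2 * cnorm r \<phi> + 1)"
      using False lam_pos M_pos cnorm_nonneg[OF r_nonneg \<phi>] cnorm_nonneg[OF r_nonneg \<psi>]
      by (intro mult_mono) auto
    then show ?thesis
      using weighted_run_diff_le_long[OF w \<psi> \<phi>] tail by (simp add: A_def mult_ac)
  qed
  ultimately show ?thesis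
    using that by blast
qed

lemma abs_lyapunov_sup_diff_le:
  assumes \<psi>: "\<psi> \<in> CC r" and \<phi>: "\<phi> \<in> CC r"
    and small: "\<And>w. admissible w \<Longrightarrow> exp (lam * dur w) * cnorm r (run w \<psi> - run w \<phi>) \<le> \<epsilon>"
  shows "\<bar>lyapunov_sup \<psi> - lyapunov_sup \<phi>\<bar> \<le> \<epsilon>"
proof -
  have "lyapunov_sup \<psi>' \<le> lyapunov_sup \<phi>' + \<epsilon>"
    if "{\<psi>', \<phi>'} = {\<psi>, \<phi>}" for \<psi>' \<phi>'
  proof (rule lyapunov_sup_le)
    fix w :: "('q \<times> real) list" assume w: "admissible w"
    have "\<psi>' \<in> CC r" "\<phi>' \<in> CC r" "cnorm r (run w \<psi>' - run w \<phi>') = cnorm r (run w \<psi> - run w \<phi>)"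
      using that \<psi> \<phi> by (auto simp: doubleton_eq_iff cnorm_commute)
    then have "exp (lam * dur w) * cnorm r (run w \<psi>')
        \<le> exp (lam * dur w) * cnorm r (run w \<phi>') + exp (lam * dur w) * cnorm r (run w \<psi> - run w \<phi>)"
      using cnorm_le_add_diff[OF r_nonneg run_CC[OF w \<open>\<psi>' \<in> CC r\<close>] run_CC[OF w \<open>\<phi>' \<in> CC r\<close>]]
      by (simp add: mult_left_mono flip: distrib_left)
    also have "\<dots> \<le> lyapunov_sup \<phi>' + \<epsilon>"
      using w \<open>\<phi>' \<in> CC r\<close> by (intro add_mono lyapunov_sup_ge small)
    finally show "exp (lam * dur w) * cnorm r (run w \<psi>') \<le> lyapunov_sup \<phi>' + \<epsilon>" .
  qed
  from this[of \<psi> \<phi>] this[of \<phi> \<psi>] show ?thesis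
    by (auto simp: insert_commute)
qed

lemma ccont_lyapunov_sup: "ccont r (\<lambda>\<psi>. lyapunov_sup \<psi> / lam)"
  unfolding ccont_def
proof (intro ballI allI impI)
  fix \<phi> :: "real \<Rightarrow> real^'n" and \<epsilon> :: real assume \<phi>: "\<phi> \<in> CC r" and "\<epsilon> > 0"
  then obtain \<delta> where "\<delta> > 0" and \<delta>: "\<And>\<psi> w. \<psi> \<in> CC r \<Longrightarrow> cnorm r (\<psi> - \<phi>) < \<delta> \<Longrightarrow> admissible w \<Longrightarrow>
      exp (lam * dur w) * cnorm r (run w \<psi> - run w \<phi>) \<le> \<epsilon> * lam / 2"
    using weighted_run_diff_small[OF \<phi>, of "\<epsilon> * lam / 2"] lam_pos by auto
  have "dist (lyapunov_sup \<psi> / lam) (lyapunov_sup \<phi> / lam) < \<epsilon>"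
    if "\<psi> \<in> CC r" "cnorm r (\<psi> - \<phi>) < \<delta>" for \<psi>
  proof -
    have "\<bar>lyapunov_sup \<psi> - lyapunov_sup \<phi>\<bar> \<le> \<epsilon> * lam / 2"
      using that \<phi> \<delta> by (intro abs_lyapunov_sup_diff_le)
    then show ?thesis
      using mult_pos_pos[OF \<open>\<epsilon> > 0\<close> lam_pos] lam_pos
      by (simp add: dist_real_def field_simps flip: diff_divide_distrib)
  qed
  then show "\<exists>\<delta>>0. \<forall>\<psi>\<in>CC r. cnorm r (\<psi> - \<phi>) < \<delta> \<longrightarrow> dist (lyapunov_sup \<psi> / lam) (lyapunov_sup \<phi> / lam) < \<epsilon>"
    using \<open>\<delta> > 0\<close> by blast
qed

lemma Dini_up_lyapunov_sup:
  assumes \<psi>: "\<psi> \<in> CC r"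
  shows "Dini_up r f q (\<lambda>\<psi>. lyapunov_sup \<psi> / lam) \<psi> \<le> ereal (- cnorm r \<psi>)"
proof -
  define v where "v = lyapunov_sup \<psi> / lam"
  have "v \<ge> 0"
    using cnorm_nonneg[OF r_nonneg \<psi>] cnorm_le_lyapunov_sup[OF \<psi>] lam_pos by (simp add: v_def)
  have "((\<lambda>h. exp (- lam * h)) has_real_derivative - lam) (at 0)"
    by (auto intro!: derivative_eq_intros)
  then have "((\<lambda>h. (exp (- lam * h) - 1) / h) \<longlongrightarrow> - lam) (at_right 0)"
    by (auto dest!: DERIV_D intro: tendsto_mono[OF at_le])
  then have lim: "((\<lambda>h. (exp (- lam * h) - 1) / h * v) \<longlongrightarrow> - lam * v) (at_right 0)"
    by (rule tendsto_mult_right)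
  have quot: "(lyapunov_sup (Tsg r f q h \<psi>) / lam - lyapunov_sup \<psi> / lam) / h
      \<le> (exp (- lam * h) - 1) / h * v" if "h > 0" for h
  proof -
    have "lyapunov_sup (Tsg r f q h \<psi>) / lam \<le> exp (- lam * h) * v"
      using lyapunov_sup_Tsg[OF \<psi>, of h q] lam_pos that by (simp add: v_def divide_right_mono)
    then have "(lyapunov_sup (Tsg r f q h \<psi>) / lam - v) / h \<le> (exp (- lam * h) * v - v) / h"
      using that by (simp add: divide_right_mono)
    also have "\<dots> = (exp (- lam * h) - 1) / h * v"
      by (simp add: field_simps)
    finally show ?thesis
      by (simp add: v_def)
  qed
  have "eventually (\<lambda>h. (lyapunov_sup (Tsg r f q h \<psi>) / lam - lyapunov_sup \<psi> / lam) / h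
      \<le> (exp (- lam * h) - 1) / h * v) (at_right 0)"
    using eventually_at_right_less[of 0] by (rule eventually_mono) (rule quot)
  then have "Dini_up r f q (\<lambda>\<psi>. lyapunov_sup \<psi> / lam) \<psi> \<le> ereal (- lam * v)"
    using lim by (rule Dini_up_le_limit)
  also have "- lam * v \<le> - cnorm r \<psi>"
    using cnorm_le_lyapunov_sup[OF \<psi>] lam_pos by (simp add: v_def)
  finally show ?thesis
    by simp
qed

lemma continuous_lyapunov_functional_exists_from_decay: "continuous_lyapunov_functional_exists r f"
  unfolding continuous_lyapunov_functional_exists_def
proof (intro exI conjI ballI allI)
  fix \<psi> :: "real \<Rightarrow> real^'n" assume \<psi>: "\<psi> \<in> CC r"
  show "lyapunov_sup \<psi> / lam \<ge> 0" "1 / lam * cnorm r \<psi> powr 1 \<le> lyapunov_sup \<psi> / lam"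
    "lyapunov_sup \<psi> / lam \<le> M / lam * cnorm r \<psi> powr 1"
    using cnorm_le_lyapunov_sup[OF \<psi>] lyapunov_sup_le_cnorm[OF \<psi>] cnorm_nonneg[OF r_nonneg \<psi>] lam_pos
    by (auto simp: divide_right_mono)
  show "Dini_up r f q (\<lambda>\<psi>. lyapunov_sup \<psi> / lam) \<psi> \<le> ereal (- (cnorm r \<psi> powr 1))" for q
    using Dini_up_lyapunov_sup[OF \<psi>] cnorm_nonneg[OF r_nonneg \<psi>] by simp
qed (use ccont_lyapunov_sup M_pos lam_pos in auto)

end

section \<open>Exponential stability from a Lyapunov functional\<close>

context
  fixes V :: "(real \<Rightarrow> real^'n) \<Rightarrow> real" and p c :: real
  assumes V_nonneg: "\<And>\<psi>. \<psi> \<in> CC r \<Longrightarrow> V \<psi> \<ge> 0" and p_pos: "p > 0" and c_pos: "c > 0"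
    and V_left_continuous: "\<And>\<psi> q t. \<psi> \<in> CC r \<Longrightarrow> t > 0 \<Longrightarrow> continuous (at_left t) (\<lambda>s. V (Tsg r f q s \<psi>))"
    and V_Dini: "\<And>\<psi> q. \<psi> \<in> CC r \<Longrightarrow> Dini_up r f q V \<psi> \<le> ereal (- (cnorm r \<psi> powr p))"
    and V_le: "\<And>\<psi>. \<psi> \<in> CC r \<Longrightarrow> V \<psi> \<le> c * cnorm r \<psi> powr p"
begin

lemma V_Tsg_decrease:
  assumes \<psi>: "\<psi> \<in> CC r" and "d \<ge> 0" "m \<ge> 0"
    and low: "\<And>s. s \<in> {0..d} \<Longrightarrow> m \<le> cnorm r (Tsg r f q s \<psi>)"
  shows "V (Tsg r f q d \<psi>) + m powr p * d \<le> V \<psi>"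
proof -
  define h where "h s = V (Tsg r f q s \<psi>) + m powr p * s" for s
  have "h d \<le> h 0"
  proof (rule right_Dini_nonpos_imp_nonincreasing[of 0 d h])
    fix t assume "t \<in> {0<..d}"
    then have "((\<lambda>s. V (Tsg r f q s \<psi>)) \<longlongrightarrow> V (Tsg r f q t \<psi>)) (at_left t)"
      using V_left_continuous[OF \<psi>, of t q] by (simp add: continuous_within)
    then show "(h \<longlongrightarrow> h t) (at_left t)"
      unfolding h_def by (intro tendsto_intros tendsto_ident_at)
  next
    fix t \<epsilon> :: real assume t: "t \<in> {0..<d}" and "\<epsilon> > 0"
    define \<xi> where "\<xi> = Tsg r f q t \<psi>"
    have "\<xi> \<in> CC r"
      using Tsg_CC[OF \<psi>] t by (simp add: \<xi>_def)
    obtain \<delta> where "\<delta> > 0" and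
      \<delta>: "\<And>k. 0 < k \<Longrightarrow> k < \<delta> \<Longrightarrow> (V (Tsg r f q k \<xi>) - V \<xi>) / k < - (cnorm r \<xi> powr p) + \<epsilon>"
      using Dini_up_le_imp_eventually_less[OF V_Dini[OF \<open>\<xi> \<in> CC r\<close>] \<open>\<epsilon> > 0\<close>]
      unfolding eventually_at_right_field by auto
    have "m powr p \<le> cnorm r \<xi> powr p"
      using low[of t] t \<open>m \<ge> 0\<close> p_pos unfolding \<xi>_def by (intro powr_mono2) auto
    have "h s \<le> h t + \<epsilon> * (s - t)" if "t < s" "s < t + \<delta>" for s
    proof -
      have "Tsg r f q (s - t) \<xi> = Tsg r f q s \<psi>"
        using Tsg_add[OF \<psi>, of t "s - t" q] t that by (simp add: \<xi>_def)
      then have "V (Tsg r f q s \<psi>) - V \<xi> < (s - t) * (- (cnorm r \<xi> powr p) + \<epsilon>)"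
        using \<delta>[of "s - t"] that by (simp add: pos_divide_less_eq mult.commute)
      also have "\<dots> \<le> (s - t) * (- (m powr p) + \<epsilon>)"
        using \<open>m powr p \<le> cnorm r \<xi> powr p\<close> that by (intro mult_left_mono) auto
      finally show ?thesis
        by (simp add: h_def \<xi>_def algebra_simps)
    qed
    then show "\<exists>\<delta>>0. \<forall>s. t < s \<and> s < t + \<delta> \<longrightarrow> h s \<le> h t + \<epsilon> * (s - t)"
      using \<open>\<delta> > 0\<close> by blast
  qed (rule \<open>d \<ge> 0\<close>)
  then show ?thesis
    using \<psi> by (simp add: h_def)
qed

lemma V_run_decrease:
  "admissible w \<Longrightarrow> \<psi> \<in> CC r \<Longrightarrow> m \<ge> 0 \<Longrightarrow> (\<And>t. t \<in> {0..dur w} \<Longrightarrow> m \<le> cnorm r (run (take_dur t w) \<psi>))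
    \<Longrightarrow> V (run w \<psi>) + m powr p * dur w \<le> V \<psi>"
proof (induction w arbitrary: \<psi>)
  case (Cons a w)
  obtain q d where a: "a = (q, d)" by (cases a)
  with Cons.prems(1) have "d \<ge> 0" "admissible w" by auto
  have "V (Tsg r f q d \<psi>) + m powr p * d \<le> V \<psi>"
  proof (rule V_Tsg_decrease[OF Cons.prems(2) \<open>d \<ge> 0\<close> Cons.prems(3)])
    fix s assume "s \<in> {0..d}"
    then show "m \<le> cnorm r (Tsg r f q s \<psi>)"
      using Cons.prems(4)[of s] dur_nonneg[OF \<open>admissible w\<close>] by (simp add: a)
  qed
  moreover have "V (run w (Tsg r f q d \<psi>)) + m powr p * dur w \<le> V (Tsg r f q d \<psi>)"
  proof (rule Cons.IH[OF \<open>admissible w\<close> Tsg_CC[OF Cons.prems(2) \<open>d \<ge> 0\<close>] Cons.prems(3)])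
    fix t assume t: "t \<in> {0..dur w}"
    show "m \<le> cnorm r (run (take_dur t w) (Tsg r f q d \<psi>))"
    proof (cases "t = 0")
      case True
      then show ?thesis
        using Cons.prems(4)[of d] \<open>d \<ge> 0\<close> dur_nonneg[OF \<open>admissible w\<close>] \<open>admissible w\<close>
          Tsg_CC[OF Cons.prems(2) \<open>d \<ge> 0\<close>] by (simp add: a)
    next
      case False
      then show ?thesis
        using Cons.prems(4)[of "t + d"] t \<open>d \<ge> 0\<close> by (simp add: a)
    qed
  qed
  ultimately show ?case
    by (simp add: a algebra_simps)
qed simp

lemma V_run_le: "admissible w \<Longrightarrow> \<psi> \<in> CC r \<Longrightarrow> V (run w \<psi>) \<le> V \<psi>"
  using V_run_decrease[of w \<psi> 0] cnorm_nonneg[OF r_nonneg run_CC[OF admissible_take_dur]] by simp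

definition overshoot :: real where
  "overshoot = exp L * max 1 (c powr (1 / p))"

lemma overshoot_ge_1: "overshoot \<ge> 1"
  using L_nonneg by (simp add: overshoot_def mult_ge1_I)

text \<open>By the Lipschitz bound, the norm along the last unit of time is at least the final norm divided
  by \<open>exp L\<close>, so \<open>V\<close> decreases by at least the \<open>p\<close>-th power of that quotient.\<close>

lemma cnorm_run_unit_le_V:
  assumes w: "admissible w" "dur w = 1" and \<xi>: "\<xi> \<in> CC r"
  shows "(cnorm r (run w \<xi>) / exp L) powr p \<le> V \<xi>"
proof -
  define m where "m = cnorm r (run w \<xi>) / exp L"
  have "m \<ge> 0"
    using cnorm_nonneg[OF r_nonneg run_CC[OF w(1) \<xi>]] by (simp add: m_def)
  have "m \<le> cnorm r (run (take_dur s w) \<xi>)" if s: "s \<in> {0..dur w}" for s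
  proof -
    define \<eta> where "\<eta> = run (take_dur s w) \<xi>"
    have "\<eta> \<in> CC r"
      using run_CC[OF admissible_take_dur[OF w(1)] \<xi>] s by (simp add: \<eta>_def)
    have "run w \<xi> = run (drop_dur s w) \<eta>"
      using run_take_drop_dur[OF w(1) _ \<xi>, of s] s by (simp add: \<eta>_def)
    then have "cnorm r (run w \<xi>) \<le> exp (L * dur (drop_dur s w)) * cnorm r \<eta>"
      using cnorm_run_le[OF admissible_drop_dur[OF w(1)] \<open>\<eta> \<in> CC r\<close>, of s] s by simp
    also have "\<dots> \<le> exp L * cnorm r \<eta>"
      using dur_drop_dur[OF w(1), of s] s w(2) L_nonneg cnorm_nonneg[OF r_nonneg \<open>\<eta> \<in> CC r\<close>]
      by (intro mult_right_mono) (simp_all add: mult_left_le)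
    finally show ?thesis
      by (simp add: m_def \<eta>_def field_simps)
  qed
  then have "V (run w \<xi>) + m powr p * 1 \<le> V \<xi>"
    using V_run_decrease[OF w(1) \<xi> \<open>m \<ge> 0\<close>] w(2) by simp
  then show ?thesis
    using V_nonneg[OF run_CC[OF w(1) \<xi>]] by (simp add: m_def)
qed

lemma cnorm_run_le_overshoot:
  assumes w: "admissible w" and \<psi>: "\<psi> \<in> CC r"
  shows "cnorm r (run w \<psi>) \<le> overshoot * cnorm r \<psi>"
proof (cases "dur w \<le> 1")
  case True
  have "cnorm r (run w \<psi>) \<le> exp (L * dur w) * cnorm r \<psi>"
    by (rule cnorm_run_le[OF w \<psi>])
  also have "\<dots> \<le> exp L * 1 * cnorm r \<psi>"
    using True L_nonneg cnorm_nonneg[OF r_nonneg \<psi>] by (intro mult_right_mono) (simp_all add: mult_left_le)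
  also have "\<dots> \<le> overshoot * cnorm r \<psi>"
    unfolding overshoot_def using cnorm_nonneg[OF r_nonneg \<psi>] by (intro mult_right_mono mult_left_mono) auto
  finally show ?thesis .
next
  case False
  define t where "t = dur w - 1"
  have t: "0 \<le> t" "t \<le> dur w"
    using False by (auto simp: t_def)
  define \<xi> where "\<xi> = run (take_dur t w) \<psi>"
  have "\<xi> \<in> CC r"
    using run_CC[OF admissible_take_dur[OF w t(1)] \<psi>] by (simp add: \<xi>_def)
  have "(cnorm r (run w \<psi>) / exp L) powr p \<le> V \<xi>"
    using cnorm_run_unit_le_V[OF admissible_drop_dur[OF w t(1)] _ \<open>\<xi> \<in> CC r\<close>]
      dur_drop_dur[OF w t] run_take_drop_dur[OF w t(1) \<psi>] by (simp add: \<xi>_def t_def)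
  also have "\<dots> \<le> c * cnorm r \<psi> powr p"
    using V_run_le[OF admissible_take_dur[OF w t(1)] \<psi>] V_le[OF \<psi>] by (simp add: \<xi>_def)
  finally have "cnorm r (run w \<psi>) / exp L \<le> c powr (1 / p) * cnorm r \<psi>"
    using p_pos c_pos cnorm_nonneg[OF r_nonneg run_CC[OF w \<psi>]] cnorm_nonneg[OF r_nonneg \<psi>]
    by (intro le_root_of_powr_le) auto
  then have "cnorm r (run w \<psi>) \<le> exp L * (c powr (1 / p) * cnorm r \<psi>)"
    by (simp add: field_simps)
  also have "\<dots> \<le> overshoot * cnorm r \<psi>"
    using cnorm_nonneg[OF r_nonneg \<psi>] by (simp add: overshoot_def mult_right_mono)
  finally show ?thesis .
qed

definition halving_time :: real where
  "halving_time = c * (2 * overshoot) powr p + 1"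

lemma halving_time_ge_1: "halving_time \<ge> 1"
  using c_pos by (simp add: halving_time_def)

text \<open>If the norm stayed above \<open>\<parallel>\<psi>\<parallel> / (2 * overshoot)\<close> until \<open>halving_time\<close>, \<open>V\<close> would drop by
  more than \<open>c \<parallel>\<psi>\<parallel> powr p \<ge> V \<psi>\<close>.\<close>

lemma cnorm_run_halving:
  assumes w: "admissible w" and \<psi>: "\<psi> \<in> CC r" and "halving_time \<le> dur w"
  shows "cnorm r (run (take_dur halving_time w) \<psi>) \<le> cnorm r \<psi> / 2"
proof (rule ccontr)
  define w' where "w' = take_dur halving_time w"
  have w': "admissible w'" "dur w' = halving_time"
    using admissible_take_dur[OF w] dur_take_dur[OF w] assms(3) halving_time_ge_1 by (simp_all add: w'_def)
  have via_prefix: "cnorm r (run w' \<psi>) \<le> overshoot * cnorm r (run (take_dur t w') \<psi>)"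
    if "t \<in> {0..dur w'}" for t
    using run_take_drop_dur[OF w'(1) _ \<psi>, of t] that
      cnorm_run_le_overshoot[OF admissible_drop_dur[OF w'(1)] run_CC[OF admissible_take_dur[OF w'(1)] \<psi>]]
    by simp
  assume "\<not> cnorm r (run w' \<psi>) \<le> cnorm r \<psi> / 2"
  then have big: "cnorm r \<psi> / 2 < cnorm r (run w' \<psi>)"
    by (simp add: w'_def)
  have "cnorm r \<psi> > 0"
  proof (rule ccontr)
    assume "\<not> cnorm r \<psi> > 0"
    then have "cnorm r \<psi> = 0"
      using cnorm_nonneg[OF r_nonneg \<psi>] by simp
    then show False
      using big cnorm_run_le_overshoot[OF w'(1) \<psi>] by simp
  qed
  define m where "m = cnorm r \<psi> / (2 * overshoot)"
  have "m \<ge> 0"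
    using \<open>cnorm r \<psi> > 0\<close> overshoot_ge_1 by (simp add: m_def)
  have "m \<le> cnorm r (run (take_dur t w') \<psi>)" if "t \<in> {0..dur w'}" for t
    using via_prefix[OF that] big overshoot_ge_1 by (simp add: m_def field_simps)
  then have "V (run w' \<psi>) + m powr p * halving_time \<le> V \<psi>"
    using V_run_decrease[OF w'(1) \<psi> \<open>m \<ge> 0\<close>] w'(2) by simp
  then have "m powr p * halving_time \<le> c * cnorm r \<psi> powr p"
    using V_nonneg[OF run_CC[OF w'(1) \<psi>]] V_le[OF \<psi>] by linarith
  moreover have "m powr p = cnorm r \<psi> powr p / (2 * overshoot) powr p"
    unfolding m_def by (rule powr_divide)
  ultimately have "cnorm r \<psi> powr p * halving_time \<le> cnorm r \<psi> powr p * (c * (2 * overshoot) powr p)"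
    using overshoot_ge_1 by (simp add: field_simps)
  then have "halving_time \<le> c * (2 * overshoot) powr p"
    using \<open>cnorm r \<psi> > 0\<close> by simp
  then show False
    by (simp add: halving_time_def)
qed

definition decay_rate :: real where
  "decay_rate = ln 2 / halving_time"

lemma decay_rate_pos: "decay_rate > 0"
  using halving_time_ge_1 by (simp add: decay_rate_def)

lemma exp_decay_rate_halving_time: "exp (decay_rate * halving_time) = 2"
  using halving_time_ge_1 by (simp add: decay_rate_def)

lemma cnorm_run_le_before_halving:
  assumes "admissible w" "\<psi> \<in> CC r" "dur w \<le> halving_time"
  shows "cnorm r (run w \<psi>) \<le> 2 * overshoot * exp (- decay_rate * dur w) * cnorm r \<psi>"
proof -
  have "decay_rate * dur w \<le> decay_rate * halving_time"
    using assms(3) decay_rate_pos by (intro mult_left_mono) auto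
  then have "exp (- decay_rate * halving_time) \<le> exp (- decay_rate * dur w)"
    by simp
  moreover have "exp (- decay_rate * halving_time) = 1 / 2"
    using exp_decay_rate_halving_time by (simp add: exp_minus)
  ultimately have "1 \<le> 2 * exp (- decay_rate * dur w)"
    by linarith
  then have "overshoot * 1 \<le> overshoot * (2 * exp (- decay_rate * dur w))"
    using overshoot_ge_1 by (intro mult_left_mono) auto
  then have "overshoot * cnorm r \<psi> \<le> overshoot * (2 * exp (- decay_rate * dur w)) * cnorm r \<psi>"
    using cnorm_nonneg[OF r_nonneg assms(2)] by (intro mult_right_mono) simp_all
  then show ?thesis
    using cnorm_run_le_overshoot[OF assms(1,2)] by (simp add: mult_ac)
qed

lemma cnorm_run_exponential_upto:
  "admissible w \<Longrightarrow> \<psi> \<in> CC r \<Longrightarrow> dur w < real n * halving_time \<Longrightarrow>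
     cnorm r (run w \<psi>) \<le> 2 * overshoot * exp (- decay_rate * dur w) * cnorm r \<psi>"
proof (induction n arbitrary: w \<psi>)
  case (Suc n)
  show ?case
  proof (cases "dur w \<le> halving_time")
    case False
    then have T: "0 \<le> halving_time" "halving_time \<le> dur w"
      using halving_time_ge_1 by auto
    define \<xi> where "\<xi> = run (take_dur halving_time w) \<psi>"
    have "\<xi> \<in> CC r"
      unfolding \<xi>_def by (rule run_CC[OF admissible_take_dur[OF Suc.prems(1) T(1)] Suc.prems(2)])
    have "cnorm r (run w \<psi>) = cnorm r (run (drop_dur halving_time w) \<xi>)"
      using run_take_drop_dur[OF Suc.prems(1) T(1) Suc.prems(2)] by (simp add: \<xi>_def)
    also have "\<dots> \<le> 2 * overshoot * exp (- decay_rate * dur (drop_dur halving_time w)) * cnorm r \<xi>"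
      using Suc.prems T \<open>\<xi> \<in> CC r\<close>
      by (intro Suc.IH admissible_drop_dur) (auto simp: dur_drop_dur algebra_simps)
    also have "\<dots> \<le> 2 * overshoot * exp (- decay_rate * dur (drop_dur halving_time w)) * (cnorm r \<psi> / 2)"
      using cnorm_run_halving[OF Suc.prems(1,2) T(2)] overshoot_ge_1
      by (intro mult_left_mono) (auto simp: \<xi>_def)
    also have "\<dots> = 2 * overshoot * exp (- decay_rate * dur w) * cnorm r \<psi>
        * (exp (decay_rate * halving_time) / 2)"
      unfolding dur_drop_dur[OF Suc.prems(1) T] by (simp add: algebra_simps flip: exp_add)
    finally show ?thesis
      by (simp add: exp_decay_rate_halving_time)
  qed (use Suc.prems cnorm_run_le_before_halving in simp)
qed (use dur_nonneg in force)

lemma cnorm_run_exponential: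
  assumes "admissible w" "\<psi> \<in> CC r"
  shows "cnorm r (run w \<psi>) \<le> 2 * overshoot * exp (- decay_rate * dur w) * cnorm r \<psi>"
proof -
  obtain n :: nat where "dur w / halving_time < n"
    using reals_Archimedean2 by blast
  then show ?thesis
    using cnorm_run_exponential_upto[OF assms] halving_time_ge_1 by (simp add: divide_less_eq)
qed

lemma UGES_from_lyapunov_functional: "UGES r f"
proof -
  have "2 * overshoot > 0"
    using overshoot_ge_1 by simp
  then show ?thesis
    unfolding UGES_iff_word_estimate using cnorm_run_exponential decay_rate_pos by blast
qed

end

lemma Tsg_left_continuous:
  assumes V: "ccont r V" and \<psi>: "\<psi> \<in> CC r" and "t > 0"
  shows "continuous (at_left t) (\<lambda>s. V (Tsg r f q s \<psi>))"
  unfolding continuous_within tendsto_iff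
proof (intro allI impI)
  fix \<epsilon> :: real assume "\<epsilon> > 0"
  have "Tsg r f q t \<psi> \<in> CC r"
    using \<psi> \<open>t > 0\<close> by (simp add: Tsg_CC)
  then obtain \<delta> where "\<delta> > 0" and
    \<delta>: "\<And>\<phi>. \<phi> \<in> CC r \<Longrightarrow> cnorm r (\<phi> - Tsg r f q t \<psi>) < \<delta> \<Longrightarrow> dist (V \<phi>) (V (Tsg r f q t \<psi>)) < \<epsilon>"
    using V \<open>\<epsilon> > 0\<close> unfolding ccont_def by blast
  obtain \<eta> where "\<eta> > 0" and
    \<eta>: "\<And>s. s \<ge> 0 \<Longrightarrow> \<bar>s - t\<bar> < \<eta> \<Longrightarrow> cnorm r (Tsg r f q s \<psi> - Tsg r f q t \<psi>) < \<delta>"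
    using Tsg_continuous[OF \<psi> _ \<open>\<delta> > 0\<close>, of t q] \<open>t > 0\<close> by auto
  have "eventually (\<lambda>s. s \<in> {max 0 (t - \<eta>)<..<t}) (at_left t)"
    using \<open>t > 0\<close> \<open>\<eta> > 0\<close> by (intro eventually_at_left_real) simp
  then show "eventually (\<lambda>s. dist (V (Tsg r f q s \<psi>)) (V (Tsg r f q t \<psi>)) < \<epsilon>) (at_left t)"
  proof (rule eventually_mono)
    fix s assume "s \<in> {max 0 (t - \<eta>)<..<t}"
    then have "s \<ge> 0" "\<bar>s - t\<bar> < \<eta>"
      by auto
    then show "dist (V (Tsg r f q s \<psi>)) (V (Tsg r f q t \<psi>)) < \<epsilon>"
      using \<delta>[OF Tsg_CC[OF \<psi>] \<eta>] by blast
  qed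
qed

lemma UGES_imp_continuous_lyapunov_functional_exists:
  assumes "UGES r f"
  shows "continuous_lyapunov_functional_exists r f"
proof -
  obtain M lam where "M > 0" "lam > 0" and
    decay: "\<And>w \<psi>. admissible w \<Longrightarrow> \<psi> \<in> CC r \<Longrightarrow> cnorm r (run w \<psi>) \<le> M * exp (- lam * dur w) * cnorm r \<psi>"
    using assms unfolding UGES_iff_word_estimate by blast
  show ?thesis
    using continuous_lyapunov_functional_exists_from_decay[OF \<open>M > 0\<close>, of "lam / 2"] decay \<open>lam > 0\<close>
    by simp
qed

lemma continuous_imp_bounded_lyapunov_functional_exists:
  assumes "continuous_lyapunov_functional_exists r f"
  shows "bounded_lyapunov_functional_exists r f"
proof -
  obtain V p cl cu where "ccont r V" "\<forall>\<psi>\<in>CC r. V \<psi> \<ge> 0" "p > 0" "cu > 0"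
    "\<forall>\<psi>\<in>CC r. V \<psi> \<le> cu * cnorm r \<psi> powr p"
    "\<forall>\<psi>\<in>CC r. \<forall>q. Dini_up r f q V \<psi> \<le> ereal (- (cnorm r \<psi> powr p))"
    using assms unfolding continuous_lyapunov_functional_exists_def by blast
  moreover have "\<forall>\<psi>\<in>CC r. \<forall>q. \<forall>t>0. continuous (at_left t) (\<lambda>s. V (Tsg r f q s \<psi>))"
    using Tsg_left_continuous[OF \<open>ccont r V\<close>] by blast
  ultimately show ?thesis
    unfolding bounded_lyapunov_functional_exists_def by blast
qed

lemma bounded_lyapunov_functional_exists_imp_UGES:
  assumes "bounded_lyapunov_functional_exists r f"
  shows "UGES r f"
proof -
  obtain V p c where "\<forall>\<psi>\<in>CC r. V \<psi> \<ge> 0" "p > 0" "c > 0"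
    "\<forall>\<psi>\<in>CC r. \<forall>q. \<forall>t>0. continuous (at_left t) (\<lambda>s. V (Tsg r f q s \<psi>))"
    "\<forall>\<psi>\<in>CC r. \<forall>q. Dini_up r f q V \<psi> \<le> ereal (- (cnorm r \<psi> powr p))"
    "\<forall>\<psi>\<in>CC r. V \<psi> \<le> c * cnorm r \<psi> powr p"
    using assms unfolding bounded_lyapunov_functional_exists_def by blast
  then show ?thesis
    by (intro UGES_from_lyapunov_functional[of V p c]) simp_all
qed

end

theorem theorem7:
  fixes r :: real and f :: "'q \<Rightarrow> (real \<Rightarrow> real^'n) \<Rightarrow> real^'n"
  assumes r: "r \<ge> 0"
    and fcont: "\<And>q. ccont r (f q)"
    and f0: "\<And>q. f q (\<lambda>_. 0) = 0"
    and ex: "\<And>q \<phi>. \<phi> \<in> CC r \<Longrightarrow> \<exists>x. is_sol r f q \<phi> x"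
    and uniq: "\<And>q \<phi> x y t. \<phi> \<in> CC r \<Longrightarrow> is_sol r f q \<phi> x \<Longrightarrow> is_sol r f q \<phi> y
                 \<Longrightarrow> t \<ge> -r \<Longrightarrow> x t = y t"
    and lip: "\<exists>L>0. \<forall>q. \<forall>\<psi>1\<in>CC r. \<forall>\<psi>2\<in>CC r.
                 norm (f q \<psi>1 - f q \<psi>2) \<le> L * cnorm r (\<psi>1 - \<psi>2)"
  shows "(UGES r f \<longleftrightarrow>
           (\<exists>V p cl cu. ccont r V \<and> (\<forall>\<psi>\<in>CC r. V \<psi> \<ge> 0) \<and> p > 0 \<and> cl > 0 \<and> cu > 0 \<and>
              (\<forall>\<psi>\<in>CC r. cl * cnorm r \<psi> powr p \<le> V \<psi> \<and> V \<psi> \<le> cu * cnorm r \<psi> powr p) \<and>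
              (\<forall>\<psi>\<in>CC r. \<forall>q. Dini_up r f q V \<psi> \<le> ereal (- (cnorm r \<psi> powr p)))))
       \<and> (UGES r f \<longleftrightarrow>
           (\<exists>V p c. (\<forall>\<psi>\<in>CC r. V \<psi> \<ge> 0) \<and> p > 0 \<and> c > 0 \<and>
              (\<forall>\<psi>\<in>CC r. \<forall>q. \<forall>t>0. continuous (at_left t) (\<lambda>s. V (Tsg r f q s \<psi>))) \<and>
              (\<forall>\<psi>\<in>CC r. \<forall>q. Dini_up r f q V \<psi> \<le> ereal (- (cnorm r \<psi> powr p))) \<and>
              (\<forall>\<psi>\<in>CC r. V \<psi> \<le> c * cnorm r \<psi> powr p)))"
proof -
  obtain L where "L > 0" and "\<forall>q. \<forall>\<psi>1\<in>CC r. \<forall>\<psi>2\<in>CC r. norm (f q \<psi>1 - f q \<psi>2) \<le> L * cnorm r (\<psi>1 - \<psi>2)"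
    using lip by blast
  then interpret switched_retarded_system r f L
    using r f0 ex uniq by unfold_locales auto
  have "UGES r f \<longleftrightarrow> continuous_lyapunov_functional_exists r f"
    "UGES r f \<longleftrightarrow> bounded_lyapunov_functional_exists r f"
    using UGES_imp_continuous_lyapunov_functional_exists
      continuous_imp_bounded_lyapunov_functional_exists
      bounded_lyapunov_functional_exists_imp_UGES by blast+
  then show ?thesis
    unfolding continuous_lyapunov_functional_exists_def bounded_lyapunov_functional_exists_def
    by (rule conjI)
qed

end
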